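(* Let $n,m\ge1$ and $x_1,\dots,x_m,y_1,\dots,y_m,z\in\mathbb{N}^{2n}$ with $x_i\le z$ and $y_i\le z$ for all $i$. Then there exist natural numbers $1\le a_1\le b_1\le a_2\le b_2\le\dots\le a_n\le b_n\le m+1$ such that for $I=\bigcup_{i=1}^n\{a_i,a_i+1,\dots,b_i-1\}$, \[-2nz+\frac12\sum_{i=1}^m(x_i+y_i)\;\le\;\sum_{i\in I}x_i+\sum_{i\in\{1,\dots,m\}\setminus I}y_i\;\le\;2nz+\frac12\sum_{i=1}^m(x_i+y_i).\]
   Context: For vectors $u,v\in\mathbb{R}^{2n}$, $u\le v$ means $u_j\le v_j$ for every component $j$. $\{a,\dots,b-1\}$ is empty if $b=a$. *)

theory Defs
  imports Complex_Main
begin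

end

theory Submission
  imports Defs "HOL-Analysis.Analysis" "HOL-Combinatorics.Transposition"
begin

text \<open>A point \<open>g\<close> of the integer cube \<open>[-M, M]\<^sup>d\<close>, \<open>d = 2n\<close>, is read as a division of the beads
  \<open>1, \<dots>, m\<close> into \<open>d\<close> consecutive runs of lengths roughly proportional to \<open>\<bar>g 0\<bar>, \<dots>, \<bar>g (d - 1)\<bar>\<close>,
  each run taking the sign of its coordinate; the negative beads among the runs \<open>2i - 2\<close> and \<open>2i - 1\<close>
  form the \<open>i\<close>-th interval. If some division is balanced, i.e. in every coordinate \<open>j\<close> the signed sum
  \<open>\<Sum>\<^sub>b \<plusminus>(x b j - y b j)\<close> is at most \<open>4n z j\<close> in absolute value, its intervals prove the theorem.
  Otherwise label \<open>g\<close> by \<open>\<plusminus>(j + 1)\<close>, where \<open>j\<close> is the first unbalanced coordinate and the sign is that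
  of its signed sum. This labelling is antipodal on the boundary of the cube, so Tucker's lemma gives two
  neighbouring grid points with complementary labels, whose signed sums in coordinate \<open>j\<close> differ by more
  than \<open>8n z j\<close>. But a unit move of \<open>g\<close> flips only beads at the \<open>2d\<close> cut points of the two divisions,
  hence changes each signed sum by at most \<open>8n z j\<close>.

  Tucker's lemma for the cubical grid is proved combinatorially, after Freund and Todd: on the Kuhn
  triangulation of each orthant, the simplices fully labelled by the labels of the orthant are linked by
  doors, and counting doors shows that, without complementary edges, the number of such simplices is
  odd in every dimension, whereas in the top dimension there are none.\<close>

section \<open>Kuhn simplices on a set of coordinates\<close>

lemma ksimplex_permute:
  assumes "ksimplex p n s" "bij \<pi>" "\<pi> ` {..<n} = {..<n}"
  shows "ksimplex p n ((\<lambda>y. y \<circ> \<pi>) ` s)"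
  using assms(1)
proof cases
  case (ksimplex base upd)
  then interpret kuhn_simplex p n base upd s .
  have \<pi>_lt: "\<pi> i < n \<longleftrightarrow> i < n" for i
    using assms(2,3) by (metis bij_is_inj image_eqI inj_image_mem_iff lessThan_iff)
  have "bij_betw \<pi> {..<n} {..<n}"
    using assms(2,3) by (metis bij_betw_subset subset_UNIV)
  then have inv_\<pi>: "bij_betw (inv \<pi>) {..<n} {..<n}"
    using assms(2) by (metis bij_betw_inv_into bij_is_inj inv_into_image_cancel assms(3) subset_UNIV
        bij_betw_imp_surj_on bij_betw_inv_into_subset)
  show ?thesis
  proof (intro ksimplex.intros, unfold_locales)
    show "base \<circ> \<pi> \<in> {..<n} \<rightarrow> {..<p}" using base \<pi>_lt by auto
    show "n \<le> i \<Longrightarrow> (base \<circ> \<pi>) i = p" for i using base_out \<pi>_lt by (simp add: not_less[symmetric])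
    show "bij_betw (inv \<pi> \<circ> upd) {..<n} {..<n}" using upd inv_\<pi> bij_betw_trans by blast
    have "(j \<in> (\<lambda>x. inv \<pi> (upd x)) ` A) = (\<pi> j \<in> upd ` A)" for j A
      using assms(2) by (auto simp: bij_def image_iff) (metis assms(2) bij_inv_eq_iff)+
    then show "(\<lambda>y. y \<circ> \<pi>) ` s = (\<lambda>i j. if j \<in> (inv \<pi> \<circ> upd) ` {..<i}
        then Suc ((base \<circ> \<pi>) j) else (base \<circ> \<pi>) j) ` {..n}"
      unfolding s_pre image_image by (intro image_cong refl) (simp add: fun_eq_iff)
  qed
qed

lemma ex_bij_image_eq:
  fixes A B :: "'a set"
  assumes "finite A" "finite B" "card A = card B"
  shows "\<exists>h. bij h \<and> h ` A = B"
proof -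
  have "card (A - B) = card (B - A)"
    using assms by (simp add: card_Diff_subset_Int Int_commute)
  moreover have "finite (A - B)" "finite (B - A)" using assms(1,2) by simp_all
  ultimately obtain g where g: "bij_betw g (A - B) (B - A)"
    by (metis finite_same_card_bij)
  define h where "h x = (if x \<in> A - B then g x else if x \<in> B - A then inv_into (A - B) g x else x)" for x
  have "h (h x) = x" for x
  proof -
    consider "x \<in> A - B" | "x \<in> B - A" | "x \<notin> A - B" "x \<notin> B - A" by blast
    then show ?thesis
    proof cases
      case 1
      then have "g x \<in> B - A" using g bij_betwE by blast
      then show ?thesis using 1 g by (simp add: h_def bij_betw_inv_into_left)
    next
      case 2
      then have "inv_into (A - B) g x \<in> A - B" using g by (meson bij_betwE bij_betw_inv_into)
      then show ?thesis using 2 g by (simp add: h_def bij_betw_inv_into_right)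
    next
      case 3
      then have "h x = x" by (auto simp: h_def)
      then show ?thesis by simp
    qed
  qed
  moreover have "h ` A = B"
  proof -
    have "h ` A = h ` (A - B) \<union> h ` (A \<inter> B)" by blast
    also have "h ` (A - B) = B - A" using g by (auto simp: h_def bij_betw_def)
    also have "h ` (A \<inter> B) = A \<inter> B" by (auto simp: h_def)
    finally show ?thesis by blast
  qed
  ultimately show ?thesis using involuntory_imp_bij by blast
qed

lemma ex_bij_image_lessThan_last:
  fixes S :: "nat set"
  assumes "finite S" "i \<in> S"
  shows "\<exists>h. bij h \<and> h ` S = {..<card S} \<and> h i = card S - 1"
proof -
  obtain h where h: "bij h" "h ` S = {..<card S}"
    using ex_bij_image_eq[of S "{..<card S}"] assms by auto
  have "h i < card S" "card S - 1 < card S"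
    using h assms by (auto simp: card_gt_0_iff)
  then have "Transposition.transpose (h i) (card S - 1) ` h ` S = {..<card S}"
    by (simp add: h(2))
  then show ?thesis
    using h(1) by (intro exI[of _ "Transposition.transpose (h i) (card S - 1) \<circ> h"]) (simp add: bij_comp image_comp)
qed

text \<open>Kuhn simplices of the grid \<open>{0..p}\<^sup>S\<close> (coordinates outside \<open>S\<close> frozen at \<open>p\<close>): the library's
  \<open>ksimplex\<close> on \<open>{..<card S}\<close>, transported to \<open>S\<close> by a renaming \<open>h\<close> of the coordinates.\<close>

definition ksimplex_on :: "nat \<Rightarrow> nat set \<Rightarrow> (nat \<Rightarrow> nat) set \<Rightarrow> bool" where
  "ksimplex_on p S s \<longleftrightarrow>
    (\<exists>h s0. bij h \<and> h ` S = {..<card S} \<and> ksimplex p (card S) s0 \<and> s = (\<lambda>y. y \<circ> h) ` s0)"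

lemma inj_comp_bij_right:
  assumes "bij h"
  shows "inj (\<lambda>y. y \<circ> h)"
  using assms by (intro injI) (metis bij_is_surj fun.map_comp o_id surj_iff)

lemma inj_image_comp_bij_right:
  assumes "bij h"
  shows "inj (image (\<lambda>y. y \<circ> h))"
  by (rule injI) (simp add: inj_image_eq_iff[OF inj_comp_bij_right[OF assms]])

lemma image_comp_bij_right_Diff:
  assumes "bij h"
  shows "(\<lambda>y. y \<circ> h) ` t - {b \<circ> h} = (\<lambda>y. y \<circ> h) ` (t - {b})"
  by (simp add: image_set_diff[OF inj_comp_bij_right[OF assms]])

lemma ksimplex_on_reindex:
  assumes "ksimplex_on p S s" "bij h" "h ` S = {..<card S}"
  shows "\<exists>s0. ksimplex p (card S) s0 \<and> s = (\<lambda>y. y \<circ> h) ` s0"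
proof -
  obtain h' s0 where h': "bij h'" "h' ` S = {..<card S}" "ksimplex p (card S) s0"
    and s: "s = (\<lambda>y. y \<circ> h') ` s0"
    using assms(1) unfolding ksimplex_on_def by blast
  define \<pi> where "\<pi> = h' \<circ> inv h"
  have "inv h ` {..<card S} = S"
    using assms(2,3) by (metis bij_is_inj image_inv_f_f)
  then have "\<pi> ` {..<card S} = {..<card S}"
    unfolding \<pi>_def using h'(2) by (metis image_comp)
  moreover have "bij \<pi>"
    unfolding \<pi>_def using h'(1) assms(2) bij_comp bij_imp_bij_inv by blast
  ultimately have "ksimplex p (card S) ((\<lambda>y. y \<circ> \<pi>) ` s0)"
    using ksimplex_permute h'(3) by blast
  moreover have "(\<lambda>y. y \<circ> h) ` (\<lambda>y. y \<circ> \<pi>) ` s0 = s"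
    unfolding image_image s \<pi>_def using assms(2)
    by (intro image_cong refl) (simp add: fun_eq_iff bij_is_inj)
  ultimately show ?thesis by blast
qed

lemma ksimplices_on_eq_image:
  assumes "bij h" "h ` S = {..<card S}"
  shows "{s. ksimplex_on p S s} = (\<lambda>s0. (\<lambda>y. y \<circ> h) ` s0) ` {s0. ksimplex p (card S) s0}"
  using ksimplex_on_reindex[OF _ assms] assms unfolding ksimplex_on_def by blast

lemma ksimplex_onE:
  assumes "ksimplex_on p S s"
  obtains h base upd s0 where "bij h" "h ` S = {..<card S}" "kuhn_simplex p (card S) base upd s0"
    "s = (\<lambda>y. y \<circ> h) ` s0"
  using assms unfolding ksimplex_on_def by (auto elim: ksimplex.cases)

lemma finite_ksimplices_on:
  assumes "finite S"
  shows "finite {s. ksimplex_on p S s}"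
proof -
  obtain h where "bij h" "h ` S = {..<card S}"
    using ex_bij_image_eq[of S "{..<card S}"] assms by auto
  then show ?thesis
    by (simp add: ksimplices_on_eq_image finite_ksimplexes)
qed

lemma ksimplex_on_card:
  assumes "ksimplex_on p S s"
  shows "card s = Suc (card S)"
  using assms unfolding ksimplex_on_def
  by (auto simp: ksimplex_card card_image inj_on_subset[OF inj_comp_bij_right])

lemma ksimplex_on_finite: "ksimplex_on p S s \<Longrightarrow> finite s"
  using ksimplex_on_card card.infinite by fastforce

lemma ksimplex_on_le_p:
  assumes "ksimplex_on p S s" "w \<in> s"
  shows "w j \<le> p"
proof -
  obtain h base upd s0 where "kuhn_simplex p (card S) base upd s0" "s = (\<lambda>y. y \<circ> h) ` s0"
    using assms(1) by (rule ksimplex_onE)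
  then show ?thesis
    using assms(2) kuhn_simplex.s_le_p by fastforce
qed

lemma ksimplex_on_eq_p:
  assumes "ksimplex_on p S s" "w \<in> s" "j \<notin> S"
  shows "w j = p"
proof -
  obtain h base upd s0 where h: "bij h" "h ` S = {..<card S}"
    and "kuhn_simplex p (card S) base upd s0" "s = (\<lambda>y. y \<circ> h) ` s0"
    using assms(1) by (rule ksimplex_onE)
  moreover have "card S \<le> h j"
    using h assms(3) by (metis bij_is_inj inj_image_mem_iff lessThan_iff not_le)
  ultimately show ?thesis
    using assms(2) kuhn_simplex.out_eq_p by fastforce
qed

lemma ksimplex_on_le_Suc:
  assumes "ksimplex_on p S s" "u \<in> s" "v \<in> s"
  shows "u j \<le> Suc (v j)"
proof -
  obtain h base upd s0 where k: "kuhn_simplex p (card S) base upd s0"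
    and s: "s = (\<lambda>y. y \<circ> h) ` s0"
    using assms(1) by (rule ksimplex_onE)
  interpret kuhn_simplex p "card S" base upd s0 by (fact k)
  obtain u0 v0 where "u0 \<in> s0" "u = u0 \<circ> h" "v0 \<in> s0" "v = v0 \<circ> h"
    using assms(2,3) s by blast
  then show ?thesis
    using le_Suc_base[of u0 "h j"] base_le[of v0 "h j"] by simp
qed

lemma ksimplex_on_ex_below_p:
  assumes "ksimplex_on p S s"
  shows "\<exists>w\<in>s. \<forall>j\<in>S. w j < p"
proof -
  obtain h base upd s0 where h: "h ` S = {..<card S}" and k: "kuhn_simplex p (card S) base upd s0"
    and s: "s = (\<lambda>y. y \<circ> h) ` s0"
    using assms(1) by (rule ksimplex_onE)
  interpret kuhn_simplex p "card S" base upd s0 by (fact k)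
  have "base \<circ> h \<in> s" using s base_in_s by blast
  moreover have "\<forall>j\<in>S. (base \<circ> h) j < p" using base h by auto
  ultimately show ?thesis by blast
qed

lemma ksimplex_on_ex_positive:
  assumes "ksimplex_on p S s"
  shows "\<exists>w\<in>s. \<forall>j\<in>S. 0 < w j"
proof -
  obtain h base upd s0 where h: "h ` S = {..<card S}" and k: "kuhn_simplex p (card S) base upd s0"
    and s: "s = (\<lambda>y. y \<circ> h) ` s0"
    using assms(1) by (rule ksimplex_onE)
  interpret kuhn_simplex p "card S" base upd s0 by (fact k)
  have "enum (card S) \<circ> h \<in> s" using s enum_in by blast
  moreover have "\<forall>j\<in>S. 0 < (enum (card S) \<circ> h) j"
    using h upd_surj by (auto simp: enum_def)
  ultimately show ?thesis by blast
qed

lemma adjacent_ksimplices_on_eq_image: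
  assumes "bij h" "h ` S = {..<card S}"
  shows "{s. ksimplex_on p S s \<and> (\<exists>b\<in>s. s - {b} = (\<lambda>y. y \<circ> h) ` f)} =
    image (\<lambda>y. y \<circ> h) ` {t. ksimplex p (card S) t \<and> (\<exists>b\<in>t. t - {b} = f)}"
proof (intro equalityI subsetI)
  fix s assume "s \<in> {s. ksimplex_on p S s \<and> (\<exists>b\<in>s. s - {b} = (\<lambda>y. y \<circ> h) ` f)}"
  then obtain b' where s: "ksimplex_on p S s" "b' \<in> s" "s - {b'} = (\<lambda>y. y \<circ> h) ` f" by blast
  obtain t where t: "ksimplex p (card S) t" "s = (\<lambda>y. y \<circ> h) ` t"
    using ksimplex_on_reindex[OF s(1) assms] by blast
  obtain b where b: "b \<in> t" "b' = b \<circ> h" using s(2) t(2) by blast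
  have "(\<lambda>y. y \<circ> h) ` (t - {b}) = s - {b'}"
    unfolding t(2) b(2) by (rule image_comp_bij_right_Diff[OF assms(1), symmetric])
  then have "(\<lambda>y. y \<circ> h) ` (t - {b}) = (\<lambda>y. y \<circ> h) ` f" using s(3) by simp
  then have "t - {b} = f" using injD[OF inj_image_comp_bij_right[OF assms(1)]] by blast
  then show "s \<in> image (\<lambda>y. y \<circ> h) ` {t. ksimplex p (card S) t \<and> (\<exists>b\<in>t. t - {b} = f)}"
    using t b(1) by blast
next
  fix s assume "s \<in> image (\<lambda>y. y \<circ> h) ` {t. ksimplex p (card S) t \<and> (\<exists>b\<in>t. t - {b} = f)}"
  then obtain t b where t: "ksimplex p (card S) t" "b \<in> t" "t - {b} = f" "s = (\<lambda>y. y \<circ> h) ` t"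
    by blast
  have "ksimplex_on p S s" unfolding ksimplex_on_def using assms t(1,4) by blast
  moreover have "s - {b \<circ> h} = (\<lambda>y. y \<circ> h) ` f"
    unfolding t(4) image_comp_bij_right_Diff[OF assms(1)] t(3) ..
  ultimately show "s \<in> {s. ksimplex_on p S s \<and> (\<exists>b\<in>s. s - {b} = (\<lambda>y. y \<circ> h) ` f)}"
    using t(2,4) by blast
qed

lemma card_ksimplex_on_adjacent:
  assumes "ksimplex_on p S s" "a \<in> s" "S \<noteq> {}" "finite S"
  shows "card {s'. ksimplex_on p S s' \<and> (\<exists>b\<in>s'. s' - {b} = s - {a})} =
    (if (\<exists>j\<in>S. \<forall>x\<in>s - {a}. x j = 0) \<or> (\<exists>j\<in>S. \<forall>x\<in>s - {a}. x j = p) then 1 else 2)"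
proof -
  obtain h s0 where h: "bij h" "h ` S = {..<card S}" and s0: "ksimplex p (card S) s0"
    and s: "s = (\<lambda>y. y \<circ> h) ` s0"
    using assms(1) unfolding ksimplex_on_def by blast
  obtain a0 where a0: "a0 \<in> s0" "a = a0 \<circ> h" using assms(2) s by blast
  have facet: "s - {a} = (\<lambda>y. y \<circ> h) ` (s0 - {a0})"
    using image_comp_bij_right_Diff[OF h(1)] s a0(2) by simp
  have card_eq: "card {s'. ksimplex_on p S s' \<and> (\<exists>b\<in>s'. s' - {b} = s - {a})} =
      card {t. ksimplex p (card S) t \<and> (\<exists>b\<in>t. t - {b} = s0 - {a0})}"
    unfolding facet adjacent_ksimplices_on_eq_image[OF h]
    by (rule card_image[OF inj_on_subset[OF inj_image_comp_bij_right[OF h(1)] subset_UNIV]])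
  have "(\<exists>j\<in>S. \<forall>x\<in>s - {a}. x j = c) \<longleftrightarrow> (\<exists>j\<in>h ` S. \<forall>y\<in>s0 - {a0}. y j = c)" for c
    unfolding facet by auto
  then have coord: "(\<exists>j\<in>S. \<forall>x\<in>s - {a}. x j = c) \<longleftrightarrow> (\<exists>j<card S. \<forall>y\<in>s0 - {a0}. y j = c)" for c
    unfolding h(2) by auto
  show ?thesis
  proof (cases "\<exists>j\<in>S. \<forall>x\<in>s - {a}. x j = 0")
    case True
    from True[unfolded coord] obtain j where "j < card S" "\<forall>y\<in>s0 - {a0}. y j = 0" by blast
    then show ?thesis using ksimplex_replace_0[OF s0 a0(1)] card_eq True by simp
  next
    case no_0: False
    show ?thesis
    proof (cases "\<exists>j\<in>S. \<forall>x\<in>s - {a}. x j = p")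
      case True
      from True[unfolded coord] obtain j where "j < card S" "\<forall>y\<in>s0 - {a0}. y j = p" by blast
      then show ?thesis using ksimplex_replace_1[OF s0 a0(1)] card_eq True by simp
    next
      case False
      have "card S \<noteq> 0" using assms(3,4) by simp
      moreover have "\<forall>j<card S. \<exists>x\<in>s0 - {a0}. x j \<noteq> 0" "\<forall>j<card S. \<exists>x\<in>s0 - {a0}. x j \<noteq> p"
        using no_0[unfolded coord] False[unfolded coord] by blast+
      ultimately show ?thesis using ksimplex_replace_2[OF s0 a0(1)] card_eq no_0 False by simp
    qed
  qed
qed

lemma ksimplex_on_top_facet:
  assumes "finite S" "i \<in> S" "0 < p" "\<forall>x\<in>f. x i = p"
  shows "ksimplex_on p (S - {i}) f \<longleftrightarrow> (\<exists>s a. ksimplex_on p S s \<and> a \<in> s \<and> f = s - {a})"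
proof -
  obtain h where h: "bij h" "h ` S = {..<card S}" "h i = card S - 1"
    using ex_bij_image_lessThan_last[OF assms(1,2)] by blast
  define c where "c = card S - 1"
  have "card S > 0" using assms(1,2) by (auto simp: card_gt_0_iff)
  then have card_S: "card S = Suc c" "card (S - {i}) = c"
    using assms(1,2) unfolding c_def by simp_all
  have "h ` (S - {i}) = h ` S - {h i}" using h(1) by (simp add: image_set_diff bij_is_inj)
  also have "\<dots> = {..<c}" unfolding h(2) h(3) card_S(1) c_def[symmetric] by auto
  finally have h': "h ` (S - {i}) = {..<card (S - {i})}" unfolding card_S(2) .
  define f0 where "f0 = (\<lambda>y. y \<circ> inv h) ` f"
  have "y \<circ> inv h \<circ> h = y" for y :: "nat \<Rightarrow> nat"
    unfolding o_assoc[symmetric] inv_o_cancel[OF bij_is_inj[OF h(1)]] by simp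
  then have f: "f = (\<lambda>y. y \<circ> h) ` f0" unfolding f0_def image_image by simp
  have "inv h c = i" using inv_f_eq[OF bij_is_inj[OF h(1)] h(3)] unfolding c_def .
  then have top: "\<forall>y\<in>f0. y c = p" using assms(4) unfolding f0_def by simp
  have "ksimplex_on p (S - {i}) f \<longleftrightarrow> ksimplex p c f0"
  proof
    assume "ksimplex_on p (S - {i}) f"
    then obtain t where t: "ksimplex p c t" "f = (\<lambda>y. y \<circ> h) ` t"
      using ksimplex_on_reindex[OF _ h(1) h'] unfolding card_S(2) by blast
    then have "(\<lambda>y. y \<circ> h) ` t = (\<lambda>y. y \<circ> h) ` f0" using f by simp
    then show "ksimplex p c f0" using t(1) injD[OF inj_image_comp_bij_right[OF h(1)]] by metis
  next
    assume "ksimplex p c f0"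
    then show "ksimplex_on p (S - {i}) f" unfolding ksimplex_on_def using h(1) h' card_S(2) f by auto
  qed
  also have "\<dots> \<longleftrightarrow> (\<exists>t b. ksimplex p (Suc c) t \<and> b \<in> t \<and> f0 = t - {b})"
    by (rule simplex_top_face[OF assms(3) top])
  also have "\<dots> \<longleftrightarrow> (\<exists>s a. ksimplex_on p S s \<and> a \<in> s \<and> f = s - {a})"
  proof
    assume "\<exists>t b. ksimplex p (Suc c) t \<and> b \<in> t \<and> f0 = t - {b}"
    then obtain t b where t: "ksimplex p (Suc c) t" "b \<in> t" "f0 = t - {b}" by blast
    have "ksimplex_on p S ((\<lambda>y. y \<circ> h) ` t)" unfolding ksimplex_on_def using h(1,2) t(1) card_S(1) by auto
    moreover have "f = (\<lambda>y. y \<circ> h) ` t - {b \<circ> h}"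
      unfolding f t(3) image_comp_bij_right_Diff[OF h(1)] ..
    ultimately show "\<exists>s a. ksimplex_on p S s \<and> a \<in> s \<and> f = s - {a}" using t(2) by blast
  next
    assume "\<exists>s a. ksimplex_on p S s \<and> a \<in> s \<and> f = s - {a}"
    then have "\<exists>s. s \<in> {s. ksimplex_on p S s \<and> (\<exists>b\<in>s. s - {b} = (\<lambda>y. y \<circ> h) ` f0)}"
      unfolding f by blast
    then obtain t b where "ksimplex p (Suc c) t" "b \<in> t" "t - {b} = f0"
      unfolding adjacent_ksimplices_on_eq_image[OF h(1,2)] card_S(1) by blast
    then show "\<exists>t b. ksimplex p (Suc c) t \<and> b \<in> t \<and> f0 = t - {b}" by blast
  qed
  finally show ?thesis .
qed

lemma ksimplex_on_facet_not_centre_and_boundary: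
  assumes "ksimplex_on p S s" "a \<in> s" "finite S" "0 < p"
    and "j \<in> S" "\<forall>x\<in>s - {a}. x j = p" and "j' \<in> S" "\<forall>x\<in>s - {a}. x j' = 0"
  shows False
proof -
  have facet: "ksimplex_on p (S - {j}) (s - {a})"
    using ksimplex_on_top_facet[OF assms(3,5,4,6)] assms(1,2) by blast
  show False
  proof (cases "j' = j")
    case True
    have "s - {a} \<noteq> {}" using ksimplex_on_card[OF facet] by (metis card.empty nat.distinct(1))
    then obtain x where "x \<in> s - {a}" by blast
    then have "x j = p" "x j = 0" using assms(6,8) True by simp_all
    then show False using assms(4) by simp
  next
    case False
    obtain w where "w \<in> s - {a}" "\<forall>i\<in>S - {j}. 0 < w i"
      using ksimplex_on_ex_positive[OF facet] by blast
    then have "0 < w j'" "w j' = 0" using assms(7,8) False by simp_all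
    then show False by simp
  qed
qed

section \<open>Counting doors\<close>

lemma even_card_involution:
  assumes "finite A" "\<And>x. x \<in> A \<Longrightarrow> g x \<in> A" "\<And>x. x \<in> A \<Longrightarrow> g (g x) = x"
    "\<And>x. x \<in> A \<Longrightarrow> g x \<noteq> x"
  shows "even (card A)"
  using assms
proof (induction "card A" arbitrary: A rule: less_induct)
  case less
  show ?case
  proof (cases "A = {}")
    case False
    then obtain x where x: "x \<in> A" by blast
    define B where "B = A - {x, g x}"
    have sub: "{x, g x} \<subseteq> A" and two: "card {x, g x} = 2"
      using less.prems(2,4)[OF x] x by auto
    have card_A: "card A = card B + 2"
      using card_Diff_subset[OF _ sub] card_mono[OF less.prems(1) sub] two unfolding B_def by simp
    have "g y \<in> B" if "y \<in> B" for y
    proof -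
      have "y \<in> A" "y \<noteq> x" "y \<noteq> g x" using that unfolding B_def by auto
      moreover have "g (g y) = y" "g (g x) = x" using less.prems(3) x \<open>y \<in> A\<close> by auto
      ultimately have "g y \<noteq> g x" "g y \<noteq> x" by metis+
      then show ?thesis using less.prems(2) \<open>y \<in> A\<close> unfolding B_def by simp
    qed
    moreover have "finite B" "card B < card A" using less.prems(1) card_A unfolding B_def by auto
    ultimately have "even (card B)"
      using less.hyps[of B] less.prems(3,4) unfolding B_def by blast
    then show ?thesis using card_A by simp
  qed simp
qed

lemma card_label_facets_fully_labelled:
  assumes "finite s" "card s = Suc (card T)" "T \<subseteq> rl ` s" "inj_on rl s"
  shows "card {a\<in>s. rl ` (s - {a}) = T} = 1"
proof -
  have card_rl: "card (rl ` s) = Suc (card T)" using assms(2,4) by (simp add: card_image)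
  then have "T \<noteq> rl ` s" by auto
  then obtain a where a: "a \<in> s" "rl a \<notin> T" using assms(3) by blast
  have img: "rl ` (s - {a}) = rl ` s - {rl a}" using assms(4) a(1) by (simp add: inj_on_image_set_diff)
  have "T = rl ` (s - {a})"
  proof (rule card_subset_eq)
    show "finite (rl ` (s - {a}))" using assms(1) by simp
    show "T \<subseteq> rl ` (s - {a})" using assms(3) a(2) img by blast
    show "card T = card (rl ` (s - {a}))" using card_rl a(1) img assms(1) by simp
  qed
  moreover have "rl ` (s - {b}) \<noteq> T" if "b \<in> s" "b \<noteq> a" for b
    using a that by blast
  ultimately have "{b\<in>s. rl ` (s - {b}) = T} = {a}" using a(1) by blast
  then show ?thesis by simp
qed

lemma image_Diff_duplicate:
  assumes "a \<in> s" "b \<in> s" "a \<noteq> b" "rl a = rl b"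
  shows "rl ` (s - {a}) = rl ` s"
proof
  show "rl ` s \<subseteq> rl ` (s - {a})"
  proof
    fix y assume "y \<in> rl ` s"
    then obtain c where "c \<in> s" "y = rl c" by blast
    then show "y \<in> rl ` (s - {a})" using assms by (cases "c = a") auto
  qed
qed auto

lemma even_card_label_facets:
  assumes "finite s" "card s = Suc (card T)" "\<not> (T \<subseteq> rl ` s \<and> inj_on rl s)"
  shows "even (card {a\<in>s. rl ` (s - {a}) = T})"
proof (cases "T \<subseteq> rl ` s")
  case False
  then have "{a\<in>s. rl ` (s - {a}) = T} = {}" by auto
  then show ?thesis by (metis card.empty dvd_0_right)
next
  case True
  with assms(3) obtain a b where ab: "a \<in> s" "b \<in> s" "a \<noteq> b" "rl a = rl b"
    by (auto simp: inj_on_def)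
  have "card (rl ` s) \<noteq> card s" using assms(3) True eq_card_imp_inj_on[OF assms(1)] by blast
  then have "card (rl ` s) \<le> card T" using card_image_le[OF assms(1), of rl] assms(2) by simp
  then have "card T = card (rl ` s)"
    using card_mono[OF finite_imageI[OF assms(1)] True] by (rule le_antisym[rotated])
  then have rl_s: "T = rl ` s" by (rule card_subset_eq[OF finite_imageI[OF assms(1)] True])
  have drop_a: "rl ` (s - {a}) = T"
    using image_Diff_duplicate[OF ab] rl_s by (rule trans[OF _ sym])
  have drop_b: "rl ` (s - {b}) = T"
    using image_Diff_duplicate[OF ab(2,1) ab(3)[symmetric] ab(4)[symmetric]] rl_s by (rule trans[OF _ sym])
  have "card (rl ` (s - {a})) = card (s - {a})"
    using assms(1,2) ab(1) unfolding drop_a by (simp add: card_Diff_singleton)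
  then have inj: "inj_on rl (s - {a})" by (rule eq_card_imp_inj_on[rotated]) (use assms(1) in simp)
  have "rl ` (s - {c}) \<noteq> T" if c: "c \<in> s" "c \<noteq> a" "c \<noteq> b" for c
  proof
    assume "rl ` (s - {c}) = T"
    then have "rl c \<in> rl ` (s - {c})" using c(1) rl_s by simp
    then obtain c' where c': "c' \<in> s - {c}" "rl c = rl c'" by (rule imageE)
    show False
    proof (cases "c' = a")
      case True
      then have "rl c = rl b" using c'(2) ab(4) by simp
      then show False using inj c ab(2,3) by (auto dest: inj_onD)
    next
      case False
      then show False using inj c c' by (auto dest: inj_onD)
    qed
  qed
  then have "{c\<in>s. rl ` (s - {c}) = T} = {a, b}"
    using ab drop_a drop_b by auto
  then show ?thesis using ab(3) by simp
qed

lemma inj_on_ex_image_notin: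
  assumes "inj_on g s" "finite T" "card T < card s"
  shows "\<exists>u\<in>s. g u \<notin> T"
proof (rule ccontr)
  assume "\<not> (\<exists>u\<in>s. g u \<notin> T)"
  then have "card s \<le> card T" using card_inj_on_le[OF assms(1) _ assms(2)] by blast
  then show False using assms(3) by simp
qed

lemma sum_card_label_facets_by_facets:
  fixes simps :: "'a set set" and rl :: "'a \<Rightarrow> 'b" and T :: "'b set" and bnd :: "'a set \<Rightarrow> bool"
  assumes "finite simps" and finite_s: "\<And>s. s \<in> simps \<Longrightarrow> finite s"
    and adjacent: "\<And>s a. s \<in> simps \<Longrightarrow> a \<in> s \<Longrightarrow>
      card {t\<in>simps. \<exists>b\<in>t. t - {b} = s - {a}} = (if bnd (s - {a}) then 1 else 2)"
  defines "L \<equiv> {f. (\<exists>s\<in>simps. \<exists>a\<in>s. f = s - {a}) \<and> rl ` f = T}"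
  shows "(\<Sum>s\<in>simps. card {a\<in>s. rl ` (s - {a}) = T}) = card {f\<in>L. bnd f} + 2 * card {f\<in>L. \<not> bnd f}"
proof -
  have "L \<subseteq> (\<Union>s\<in>simps. (\<lambda>a. s - {a}) ` s)" unfolding L_def by blast
  then have "finite L" using \<open>finite simps\<close> finite_s by (meson finite_UN_I finite_imageI finite_subset)
  have "card {a\<in>s. rl ` (s - {a}) = T} = card {f\<in>L. \<exists>a\<in>s. f = s - {a}}" if "s \<in> simps" for s
  proof -
    have "inj_on (\<lambda>a. s - {a}) s"
    proof (rule inj_onI)
      fix a b assume "a \<in> s" "s - {a} = s - {b}"
      then show "a = b" by blast
    qed
    moreover have "{f\<in>L. \<exists>a\<in>s. f = s - {a}} = (\<lambda>a. s - {a}) ` {a\<in>s. rl ` (s - {a}) = T}"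
    proof (intro equalityI subsetI)
      fix f assume "f \<in> {f\<in>L. \<exists>a\<in>s. f = s - {a}}"
      then obtain a where "a \<in> s" "f = s - {a}" "rl ` f = T" unfolding L_def by blast
      then show "f \<in> (\<lambda>a. s - {a}) ` {a\<in>s. rl ` (s - {a}) = T}" by blast
    next
      fix f assume "f \<in> (\<lambda>a. s - {a}) ` {a\<in>s. rl ` (s - {a}) = T}"
      then obtain a where "a \<in> s" "f = s - {a}" "rl ` f = T" by blast
      then show "f \<in> {f\<in>L. \<exists>a\<in>s. f = s - {a}}" unfolding L_def using that by blast
    qed
    ultimately show ?thesis by (simp add: card_image inj_on_subset)
  qed
  then have "(\<Sum>s\<in>simps. card {a\<in>s. rl ` (s - {a}) = T}) = (\<Sum>s\<in>simps. card {f\<in>L. \<exists>a\<in>s. f = s - {a}})"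
    by (rule sum.cong[OF refl])
  also have "\<dots> = (\<Sum>f\<in>L. if bnd f then 1 else 2)"
  proof (rule sum_multicount_gen[OF \<open>finite simps\<close> \<open>finite L\<close>], intro ballI)
    fix f assume "f \<in> L"
    then obtain s a where s: "s \<in> simps" "a \<in> s" and f: "f = s - {a}" unfolding L_def by blast
    have "{t\<in>simps. \<exists>b\<in>t. f = t - {b}} = {t\<in>simps. \<exists>b\<in>t. t - {b} = s - {a}}"
      unfolding f by (auto simp: eq_commute)
    then show "card {t\<in>simps. \<exists>b\<in>t. f = t - {b}} = (if bnd f then 1 else 2)"
      using adjacent[OF s] f by simp
  qed
  also have "\<dots> = card {f\<in>L. bnd f} + 2 * card {f\<in>L. \<not> bnd f}"
    using \<open>finite L\<close> by (simp add: sum.If_cases Int_def)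
  finally show ?thesis .
qed

lemma even_sum_card_label_facets_plus_fully_labelled:
  fixes simps :: "'a set set" and rl :: "'a \<Rightarrow> 'b"
  assumes "finite simps" and card_simps: "\<And>s. s \<in> simps \<Longrightarrow> finite s \<and> card s = Suc (card T)"
  shows "even ((\<Sum>s\<in>simps. card {a\<in>s. rl ` (s - {a}) = T}) + card {s\<in>simps. T \<subseteq> rl ` s \<and> inj_on rl s})"
proof -
  define N where "N s = card {a\<in>s. rl ` (s - {a}) = T}" for s
  define full where "full = {s\<in>simps. T \<subseteq> rl ` s \<and> inj_on rl s}"
  have "(\<Sum>s\<in>full. N s) = (\<Sum>s\<in>full. 1)"
  proof (rule sum.cong[OF refl])
    fix s assume "s \<in> full"
    then show "N s = 1"
      unfolding full_def N_def using card_label_facets_fully_labelled card_simps by blast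
  qed
  moreover have "even (\<Sum>s\<in>simps - full. N s)"
  proof (rule dvd_sum)
    fix s assume "s \<in> simps - full"
    then show "even (N s)"
      unfolding full_def N_def using even_card_label_facets card_simps by blast
  qed
  moreover have "full \<subseteq> simps" unfolding full_def by blast
  then have "(\<Sum>s\<in>simps. N s) = (\<Sum>s\<in>full. N s) + (\<Sum>s\<in>simps - full. N s)"
    using sum.subset_diff[OF _ \<open>finite simps\<close>, of full N] by (simp add: add.commute)
  ultimately show ?thesis unfolding N_def[symmetric] full_def[symmetric] by simp
qed

text \<open>The parity argument of Sperner-type lemmas: counting pairs of a simplex and one of its facets labelled
  exactly by \<open>T\<close>, a fully labelled simplex contributes one pair and any other simplex an even number,
  while a labelled facet is counted once on the boundary and twice in the interior.\<close>

lemma even_card_fully_labelled_plus_boundary: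
  fixes simps :: "'a set set" and rl :: "'a \<Rightarrow> 'b"
  assumes "finite simps" and card_simps: "\<And>s. s \<in> simps \<Longrightarrow> card s = Suc (card T)"
    and adjacent: "\<And>s a. s \<in> simps \<Longrightarrow> a \<in> s \<Longrightarrow>
      card {t\<in>simps. \<exists>b\<in>t. t - {b} = s - {a}} = (if bnd (s - {a}) then 1 else 2)"
  shows "even (card {s\<in>simps. T \<subseteq> rl ` s \<and> inj_on rl s}
    + card {f. (\<exists>s\<in>simps. \<exists>a\<in>s. f = s - {a}) \<and> bnd f \<and> rl ` f = T})"
proof -
  have finite_s: "finite s" if "s \<in> simps" for s
    using card_simps[OF that] card.infinite by fastforce
  have "{f\<in>{f. (\<exists>s\<in>simps. \<exists>a\<in>s. f = s - {a}) \<and> rl ` f = T}. bnd f}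
      = {f. (\<exists>s\<in>simps. \<exists>a\<in>s. f = s - {a}) \<and> bnd f \<and> rl ` f = T}"
    by blast
  then have "(\<Sum>s\<in>simps. card {a\<in>s. rl ` (s - {a}) = T})
      = card {f. (\<exists>s\<in>simps. \<exists>a\<in>s. f = s - {a}) \<and> bnd f \<and> rl ` f = T}
        + 2 * card {f\<in>{f. (\<exists>s\<in>simps. \<exists>a\<in>s. f = s - {a}) \<and> rl ` f = T}. \<not> bnd f}"
    using sum_card_label_facets_by_facets[OF assms(1) finite_s adjacent, of rl T] by simp
  moreover have "even ((\<Sum>s\<in>simps. card {a\<in>s. rl ` (s - {a}) = T})
      + card {s\<in>simps. T \<subseteq> rl ` s \<and> inj_on rl s})"
    using even_sum_card_label_facets_plus_fully_labelled[OF assms(1)] finite_s card_simps by blast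
  ultimately show ?thesis by presburger
qed

definition sign_vector :: "nat \<Rightarrow> (nat \<Rightarrow> int) \<Rightarrow> bool" where
  "sign_vector d \<epsilon> \<longleftrightarrow> (\<forall>i. \<epsilon> i \<in> {-1, 0, 1}) \<and> (\<forall>i\<ge>d. \<epsilon> i = 0)"

definition support :: "(nat \<Rightarrow> int) \<Rightarrow> nat set" where
  "support \<epsilon> = {i. \<epsilon> i \<noteq> 0}"

text \<open>Coordinates are numbered from \<open>0\<close>, labels from \<open>\<plusminus>1\<close>: coordinate \<open>i\<close> of the orthant carries
  the label \<open>\<epsilon> i * (i + 1)\<close>.\<close>

definition signed_labels :: "(nat \<Rightarrow> int) \<Rightarrow> int set" where
  "signed_labels \<epsilon> = (\<lambda>i. \<epsilon> i * int (Suc i)) ` support \<epsilon>"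

lemma support_subset_lessThan: "sign_vector d \<epsilon> \<Longrightarrow> support \<epsilon> \<subseteq> {..<d}"
  unfolding sign_vector_def support_def by (auto simp: not_less[symmetric])

lemma finite_support: "sign_vector d \<epsilon> \<Longrightarrow> finite (support \<epsilon>)"
  using support_subset_lessThan finite_subset by blast

lemma sign_vector_nonzero: "sign_vector d \<epsilon> \<Longrightarrow> \<epsilon> i \<noteq> 0 \<Longrightarrow> \<epsilon> i = 1 \<or> \<epsilon> i = -1"
  unfolding sign_vector_def by auto

lemma signed_label_index:
  assumes "e = 1 \<or> e = -1"
  shows "nat \<bar>e * int (Suc i)\<bar> - 1 = i" "sgn (e * int (Suc i)) = e"
  using assms by auto

lemma mem_signed_labels:
  assumes "sign_vector d \<epsilon>"
  shows "l \<in> signed_labels \<epsilon> \<longleftrightarrow> l \<noteq> 0 \<and> \<epsilon> (nat \<bar>l\<bar> - 1) = sgn l"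
proof
  assume "l \<in> signed_labels \<epsilon>"
  then obtain i where "\<epsilon> i \<noteq> 0" "l = \<epsilon> i * int (Suc i)"
    unfolding signed_labels_def support_def by blast
  then show "l \<noteq> 0 \<and> \<epsilon> (nat \<bar>l\<bar> - 1) = sgn l"
    using signed_label_index[OF sign_vector_nonzero[OF assms]] by simp
next
  assume l: "l \<noteq> 0 \<and> \<epsilon> (nat \<bar>l\<bar> - 1) = sgn l"
  then have "l = \<epsilon> (nat \<bar>l\<bar> - 1) * int (Suc (nat \<bar>l\<bar> - 1))" "\<epsilon> (nat \<bar>l\<bar> - 1) \<noteq> 0"
    by (auto simp: sgn_mult_abs Suc_diff_1 sgn_0_0)
  then show "l \<in> signed_labels \<epsilon>"
    unfolding signed_labels_def support_def by blast
qed

lemma card_signed_labels: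
  assumes "sign_vector d \<epsilon>"
  shows "card (signed_labels \<epsilon>) = card (support \<epsilon>)"
proof -
  have "inj_on (\<lambda>i. \<epsilon> i * int (Suc i)) (support \<epsilon>)"
  proof (rule inj_onI)
    fix i j assume ij: "i \<in> support \<epsilon>" "j \<in> support \<epsilon>"
      and eq: "\<epsilon> i * int (Suc i) = \<epsilon> j * int (Suc j)"
    have index: "nat \<bar>\<epsilon> k * int (Suc k)\<bar> - 1 = k" if "k \<in> support \<epsilon>" for k
    proof -
      have "\<epsilon> k = 1 \<or> \<epsilon> k = -1" using that sign_vector_nonzero[OF assms] unfolding support_def by simp
      then show ?thesis by (rule signed_label_index(1))
    qed
    have "i = nat \<bar>\<epsilon> i * int (Suc i)\<bar> - 1" by (rule index[OF ij(1), symmetric])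
    also have "\<dots> = j" unfolding eq by (rule index[OF ij(2)])
    finally show "i = j" .
  qed
  then show ?thesis unfolding signed_labels_def by (simp add: card_image)
qed

lemma signed_labels_inj:
  assumes "sign_vector d \<epsilon>\<^sub>1" "sign_vector d \<epsilon>\<^sub>2" "signed_labels \<epsilon>\<^sub>1 = signed_labels \<epsilon>\<^sub>2"
  shows "\<epsilon>\<^sub>1 = \<epsilon>\<^sub>2"
proof
  have agree: "\<epsilon>' i = \<epsilon> i"
    if "sign_vector d \<epsilon>" "sign_vector d \<epsilon>'" "signed_labels \<epsilon> = signed_labels \<epsilon>'" "\<epsilon> i \<noteq> 0"
    for \<epsilon> \<epsilon>' i
  proof -
    have "\<epsilon> i * int (Suc i) \<in> signed_labels \<epsilon>'"
      using that unfolding signed_labels_def support_def by auto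
    then show ?thesis
      using signed_label_index[OF sign_vector_nonzero[OF that(1,4)]] mem_signed_labels[OF that(2)]
      by simp
  qed
  fix i
  show "\<epsilon>\<^sub>1 i = \<epsilon>\<^sub>2 i"
    using agree[OF assms, of i] agree[OF assms(2,1) assms(3)[symmetric], of i] by fastforce
qed

lemma finite_sign_vectors: "finite {\<epsilon>. sign_vector d \<epsilon>}"
proof (rule finite_subset)
  show "{\<epsilon>. sign_vector d \<epsilon>} \<subseteq> (\<lambda>f i. if i < d then f i else 0) ` ({..<d} \<rightarrow>\<^sub>E {-1, 0, 1})"
  proof
    fix \<epsilon> assume "\<epsilon> \<in> {\<epsilon>. sign_vector d \<epsilon>}"
    then have "restrict \<epsilon> {..<d} \<in> {..<d} \<rightarrow>\<^sub>E {-1, 0, 1}"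
      and "\<epsilon> = (\<lambda>i. if i < d then restrict \<epsilon> {..<d} i else 0)"
      unfolding sign_vector_def by (auto simp: fun_eq_iff)
    then show "\<epsilon> \<in> (\<lambda>f i. if i < d then f i else 0) ` ({..<d} \<rightarrow>\<^sub>E {-1, 0, 1})" by blast
  qed
qed (simp add: finite_PiE)

lemma sign_vector_uminus: "sign_vector d \<epsilon> \<Longrightarrow> sign_vector d (\<lambda>i. - \<epsilon> i)"
  unfolding sign_vector_def by auto

lemma support_uminus [simp]: "support (\<lambda>i. - \<epsilon> i) = support \<epsilon>"
  unfolding support_def by auto

lemma signed_labels_uminus: "signed_labels (\<lambda>i. - \<epsilon> i) = uminus ` signed_labels \<epsilon>"
  unfolding signed_labels_def by (auto simp: image_image)

lemma sign_vector_upd_0: "sign_vector d \<epsilon> \<Longrightarrow> sign_vector d (\<epsilon>(j := 0))"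
  unfolding sign_vector_def by auto

lemma support_upd_0 [simp]: "support (\<epsilon>(j := 0)) = support \<epsilon> - {j}"
  unfolding support_def by auto

lemma signed_labels_upd_0_subset: "signed_labels (\<epsilon>(j := 0)) \<subseteq> signed_labels \<epsilon>"
  unfolding signed_labels_def by auto

lemma sign_vector_upd:
  "sign_vector d \<epsilon> \<Longrightarrow> i < d \<Longrightarrow> e \<in> {-1, 0, 1} \<Longrightarrow> sign_vector d (\<epsilon>(i := e))"
  unfolding sign_vector_def by auto

lemma support_upd_nonzero: "e \<noteq> 0 \<Longrightarrow> support (\<epsilon>(i := e)) = insert i (support \<epsilon>)"
  unfolding support_def by auto

lemma signed_labels_upd_nonzero:
  assumes "\<epsilon> i = 0" "e \<noteq> 0"
  shows "signed_labels (\<epsilon>(i := e)) = insert (e * int (Suc i)) (signed_labels \<epsilon>)"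
proof -
  have "i \<notin> support \<epsilon>" using assms(1) unfolding support_def by simp
  then have "(\<lambda>j. (\<epsilon>(i := e)) j * int (Suc j)) ` support \<epsilon> = signed_labels \<epsilon>"
    unfolding signed_labels_def by (intro image_cong) auto
  then show ?thesis unfolding signed_labels_def support_upd_nonzero[OF assms(2)] by simp
qed

section \<open>Tucker's lemma on the cubical grid\<close>

text \<open>A grid point \<open>w \<in> {0..p}\<^sup>S\<close> of the orthant with sign vector \<open>\<epsilon>\<close> and support \<open>S\<close>, as an integer point
  of the cube \<open>[-p, p]\<^sup>d\<close>: \<open>w i = p\<close> is the centre and \<open>w i = 0\<close> the boundary in direction \<open>i\<close>.\<close>

definition orthant_point :: "nat \<Rightarrow> (nat \<Rightarrow> int) \<Rightarrow> (nat \<Rightarrow> nat) \<Rightarrow> nat \<Rightarrow> int" where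
  "orthant_point p \<epsilon> w = (\<lambda>i. \<epsilon> i * (int p - int (w i)))"

lemma orthant_point_uminus: "orthant_point p (\<lambda>i. - \<epsilon> i) w = - orthant_point p \<epsilon> w"
  unfolding orthant_point_def by (simp add: fun_eq_iff)

lemma orthant_point_upd_centre: "w j = p \<Longrightarrow> orthant_point p (\<epsilon>(j := c)) w = orthant_point p \<epsilon> w"
  unfolding orthant_point_def by (simp add: fun_eq_iff)

locale tucker_labelling =
  fixes d p :: nat and lam :: "(nat \<Rightarrow> int) \<Rightarrow> int"
  assumes p_pos: "0 < p"
    and label_range: "\<And>\<epsilon> s w. sign_vector d \<epsilon> \<Longrightarrow> ksimplex_on p (support \<epsilon>) s \<Longrightarrow> w \<in> s \<Longrightarrow>
      1 \<le> \<bar>lam (orthant_point p \<epsilon> w)\<bar> \<and> \<bar>lam (orthant_point p \<epsilon> w)\<bar> \<le> int d"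
    and label_antipodal: "\<And>\<epsilon> s w j. sign_vector d \<epsilon> \<Longrightarrow> ksimplex_on p (support \<epsilon>) s \<Longrightarrow> w \<in> s \<Longrightarrow>
      \<epsilon> j \<noteq> 0 \<Longrightarrow> w j = 0 \<Longrightarrow> lam (- orthant_point p \<epsilon> w) = - lam (orthant_point p \<epsilon> w)"
begin

definition label :: "(nat \<Rightarrow> int) \<Rightarrow> (nat \<Rightarrow> nat) \<Rightarrow> int" where
  "label \<epsilon> w = lam (orthant_point p \<epsilon> w)"

definition complementary_free :: bool where
  "complementary_free \<longleftrightarrow> (\<forall>\<epsilon> s u v. sign_vector d \<epsilon> \<longrightarrow> ksimplex_on p (support \<epsilon>) s \<longrightarrow>
    u \<in> s \<longrightarrow> v \<in> s \<longrightarrow> label \<epsilon> u \<noteq> - label \<epsilon> v)"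

definition orthants :: "nat \<Rightarrow> (nat \<Rightarrow> int) set" where
  "orthants k = {\<epsilon>. sign_vector d \<epsilon> \<and> card (support \<epsilon>) = k}"

definition fully_labelled :: "(nat \<Rightarrow> int) \<Rightarrow> (nat \<Rightarrow> nat) set set" where
  "fully_labelled \<epsilon> =
    {s. ksimplex_on p (support \<epsilon>) s \<and> signed_labels \<epsilon> \<subseteq> label \<epsilon> ` s \<and> inj_on (label \<epsilon>) s}"

definition facets :: "(nat \<Rightarrow> int) \<Rightarrow> (nat \<Rightarrow> nat) set set" where
  "facets \<epsilon> = {f. \<exists>s. ksimplex_on p (support \<epsilon>) s \<and> (\<exists>a\<in>s. f = s - {a})}"

text \<open>Doors are facets carrying exactly the labels of the orthant; an inner door lies on a lower-dimensional
  orthant, an outer door on the boundary of the cube.\<close>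

definition inner_doors :: "(nat \<Rightarrow> int) \<Rightarrow> (nat \<Rightarrow> nat) set set" where
  "inner_doors \<epsilon> =
    {f\<in>facets \<epsilon>. (\<exists>j\<in>support \<epsilon>. \<forall>x\<in>f. x j = p) \<and> label \<epsilon> ` f = signed_labels \<epsilon>}"

definition outer_doors :: "(nat \<Rightarrow> int) \<Rightarrow> (nat \<Rightarrow> nat) set set" where
  "outer_doors \<epsilon> =
    {f\<in>facets \<epsilon>. (\<exists>j\<in>support \<epsilon>. \<forall>x\<in>f. x j = 0) \<and> label \<epsilon> ` f = signed_labels \<epsilon>}"

lemma finite_orthants: "finite (orthants k)"
  unfolding orthants_def using finite_sign_vectors[of d] by (rule finite_subset[rotated]) auto

lemma finite_facets:
  assumes "sign_vector d \<epsilon>"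
  shows "finite (facets \<epsilon>)"
proof -
  have "facets \<epsilon> = (\<Union>s\<in>{s. ksimplex_on p (support \<epsilon>) s}. (\<lambda>a. s - {a}) ` s)"
    unfolding facets_def by blast
  then show ?thesis
    using finite_ksimplices_on[OF finite_support[OF assms]] ksimplex_on_finite by auto
qed

lemma finite_fully_labelled: "sign_vector d \<epsilon> \<Longrightarrow> finite (fully_labelled \<epsilon>)"
  using finite_ksimplices_on[OF finite_support] unfolding fully_labelled_def
  by (rule finite_subset[rotated]) auto

lemma label_upd_centre: "w j = p \<Longrightarrow> label (\<epsilon>(j := c)) w = label \<epsilon> w"
  unfolding label_def by (simp add: orthant_point_upd_centre)

definition fully_labelled_at :: "nat \<Rightarrow> ((nat \<Rightarrow> int) \<times> (nat \<Rightarrow> nat) set) set" where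
  "fully_labelled_at k = Sigma (orthants k) fully_labelled"

definition inner_doors_at :: "nat \<Rightarrow> ((nat \<Rightarrow> int) \<times> (nat \<Rightarrow> nat) set) set" where
  "inner_doors_at k = Sigma (orthants k) inner_doors"

definition outer_doors_at :: "nat \<Rightarrow> ((nat \<Rightarrow> int) \<times> (nat \<Rightarrow> nat) set) set" where
  "outer_doors_at k = Sigma (orthants k) outer_doors"

lemma even_card_fully_labelled_plus_doors:
  assumes "\<epsilon> \<in> orthants k" "1 \<le> k"
  shows "even (card (fully_labelled \<epsilon>) + card (inner_doors \<epsilon>) + card (outer_doors \<epsilon>))"
proof -
  have \<epsilon>: "sign_vector d \<epsilon>" "card (support \<epsilon>) = k" using assms(1) unfolding orthants_def by auto
  have "support \<epsilon> \<noteq> {}" using \<epsilon>(2) assms(2) by auto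
  define bnd where "bnd f \<longleftrightarrow> (\<exists>j\<in>support \<epsilon>. \<forall>x\<in>f. x j = 0) \<or> (\<exists>j\<in>support \<epsilon>. \<forall>x\<in>f. x j = p)"
    for f :: "(nat \<Rightarrow> nat) set"
  have "even (card {s\<in>{s. ksimplex_on p (support \<epsilon>) s}. signed_labels \<epsilon> \<subseteq> label \<epsilon> ` s \<and> inj_on (label \<epsilon>) s}
      + card {f. (\<exists>s\<in>{s. ksimplex_on p (support \<epsilon>) s}. \<exists>a\<in>s. f = s - {a}) \<and> bnd f
        \<and> label \<epsilon> ` f = signed_labels \<epsilon>})"
  proof (rule even_card_fully_labelled_plus_boundary)
    show "finite {s. ksimplex_on p (support \<epsilon>) s}"
      using finite_ksimplices_on[OF finite_support[OF \<epsilon>(1)]] .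
    show "card s = Suc (card (signed_labels \<epsilon>))" if "s \<in> {s. ksimplex_on p (support \<epsilon>) s}" for s
      using that ksimplex_on_card card_signed_labels[OF \<epsilon>(1)] by simp
    show "card {t\<in>{s. ksimplex_on p (support \<epsilon>) s}. \<exists>b\<in>t. t - {b} = s - {a}} = (if bnd (s - {a}) then 1 else 2)"
      if "s \<in> {s. ksimplex_on p (support \<epsilon>) s}" "a \<in> s" for s a
      using card_ksimplex_on_adjacent[OF _ that(2) \<open>support \<epsilon> \<noteq> {}\<close> finite_support[OF \<epsilon>(1)]] that(1)
      unfolding bnd_def by simp
  qed
  moreover have "(\<exists>s\<in>{s. ksimplex_on p (support \<epsilon>) s}. \<exists>a\<in>s. f = s - {a}) \<longleftrightarrow> f \<in> facets \<epsilon>" for f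
    unfolding facets_def by blast
  then have "{f. (\<exists>s\<in>{s. ksimplex_on p (support \<epsilon>) s}. \<exists>a\<in>s. f = s - {a}) \<and> bnd f
      \<and> label \<epsilon> ` f = signed_labels \<epsilon>} = inner_doors \<epsilon> \<union> outer_doors \<epsilon>"
    unfolding inner_doors_def outer_doors_def bnd_def by auto
  moreover have "inner_doors \<epsilon> \<inter> outer_doors \<epsilon> = {}"
  proof (intro equals0I)
    fix f assume "f \<in> inner_doors \<epsilon> \<inter> outer_doors \<epsilon>"
    then obtain j j' where f: "f \<in> facets \<epsilon>" and j: "j \<in> support \<epsilon>" "\<forall>x\<in>f. x j = p"
      and j': "j' \<in> support \<epsilon>" "\<forall>x\<in>f. x j' = 0"
      unfolding inner_doors_def outer_doors_def by auto
    from f obtain s a where s: "ksimplex_on p (support \<epsilon>) s" "a \<in> s" "f = s - {a}"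
      unfolding facets_def by blast
    show False
      using ksimplex_on_facet_not_centre_and_boundary[OF s(1,2) finite_support[OF \<epsilon>(1)] p_pos j(1) _ j'(1)]
        j(2) j'(2) s(3) by blast
  qed
  moreover have "finite (inner_doors \<epsilon>)" "finite (outer_doors \<epsilon>)"
    using finite_facets[OF \<epsilon>(1)] unfolding inner_doors_def outer_doors_def by auto
  ultimately show ?thesis
    unfolding fully_labelled_def by (simp add: card_Un_disjoint add.assoc)
qed

lemma even_card_level:
  assumes "1 \<le> k"
  shows "even (card (fully_labelled_at k) + card (inner_doors_at k) + card (outer_doors_at k))"
proof -
  have "finite (fully_labelled \<epsilon>)" "finite (inner_doors \<epsilon>)" "finite (outer_doors \<epsilon>)"
    if "\<epsilon> \<in> orthants k" for \<epsilon>
    using that finite_fully_labelled finite_facets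
    unfolding orthants_def inner_doors_def outer_doors_def by auto
  then have "card (fully_labelled_at k) + card (inner_doors_at k) + card (outer_doors_at k) =
      (\<Sum>\<epsilon>\<in>orthants k. card (fully_labelled \<epsilon>) + card (inner_doors \<epsilon>) + card (outer_doors \<epsilon>))"
    unfolding fully_labelled_at_def inner_doors_at_def outer_doors_at_def
    using finite_orthants by (simp add: card_SigmaI sum.distrib)
  then show ?thesis
    using even_card_fully_labelled_plus_doors assms by (simp add: dvd_sum)
qed

text \<open>Outer doors come in antipodal pairs.\<close>

lemma even_card_outer_doors_at:
  assumes "1 \<le> k"
  shows "even (card (outer_doors_at k))"
proof (rule even_card_involution)
  show "finite (outer_doors_at k)"
    unfolding outer_doors_at_def outer_doors_def orthants_def
    using finite_orthants finite_facets by (intro finite_SigmaI) (auto simp: orthants_def)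
  fix x assume "x \<in> outer_doors_at k"
  then obtain \<epsilon> f j where x: "x = (\<epsilon>, f)" and \<epsilon>: "\<epsilon> \<in> orthants k" and f: "f \<in> facets \<epsilon>"
    and labels: "label \<epsilon> ` f = signed_labels \<epsilon>" and j: "j \<in> support \<epsilon>" "\<forall>y\<in>f. y j = 0"
    unfolding outer_doors_at_def outer_doors_def by blast
  have sv: "sign_vector d \<epsilon>" using \<epsilon> unfolding orthants_def by simp
  obtain s a where s: "ksimplex_on p (support \<epsilon>) s" "a \<in> s" "f = s - {a}"
    using f unfolding facets_def by blast
  have "label (\<lambda>i. - \<epsilon> i) w = - label \<epsilon> w" if "w \<in> f" for w
    using label_antipodal[OF sv s(1), of w j] that s(3) j unfolding support_def label_def
    by (simp add: orthant_point_uminus)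
  then have "label (\<lambda>i. - \<epsilon> i) ` f = uminus ` label \<epsilon> ` f"
    by (simp add: image_image cong: image_cong)
  then have "label (\<lambda>i. - \<epsilon> i) ` f = signed_labels (\<lambda>i. - \<epsilon> i)"
    unfolding labels signed_labels_uminus .
  then show "(\<lambda>(\<epsilon>, f). (\<lambda>i. - \<epsilon> i, f)) x \<in> outer_doors_at k"
    using \<epsilon> f j x sign_vector_uminus[OF sv]
    unfolding outer_doors_at_def outer_doors_def orthants_def facets_def by auto
  show "(\<lambda>(\<epsilon>, f). (\<lambda>i. - \<epsilon> i, f)) ((\<lambda>(\<epsilon>, f). (\<lambda>i. - \<epsilon> i, f)) x) = x"
    using x by simp
  show "(\<lambda>(\<epsilon>, f). (\<lambda>i. - \<epsilon> i, f)) x \<noteq> x"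
    using x j(1) unfolding support_def by (auto simp: fun_eq_iff)
qed

text \<open>The orthant of the face on which a facet lies: coordinates at the centre \<open>p\<close> are dropped.\<close>

definition facet_orthant :: "(nat \<Rightarrow> int) \<Rightarrow> (nat \<Rightarrow> nat) set \<Rightarrow> nat \<Rightarrow> int" where
  "facet_orthant \<epsilon> f = (\<lambda>j. if \<forall>x\<in>f. x j = p then 0 else \<epsilon> j)"

lemma facet_orthant_eq:
  assumes "j \<in> support \<epsilon>" "\<forall>x\<in>f. x j = p" "ksimplex_on p (support \<epsilon> - {j}) f"
  shows "facet_orthant \<epsilon> f = \<epsilon>(j := 0)"
proof
  fix i
  obtain w where w: "w \<in> f" "\<forall>i\<in>support \<epsilon> - {j}. w i < p"
    using ksimplex_on_ex_below_p[OF assms(3)] by blast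
  show "facet_orthant \<epsilon> f i = (\<epsilon>(j := 0)) i"
    using assms(2) w unfolding facet_orthant_def support_def by (cases "i = j") fastforce+
qed

lemma inner_doors_atE:
  assumes "(\<epsilon>, f) \<in> inner_doors_at k"
  obtains j where "\<epsilon> \<in> orthants k" "j \<in> support \<epsilon>" "\<forall>x\<in>f. x j = p"
    "ksimplex_on p (support \<epsilon> - {j}) f" "facet_orthant \<epsilon> f = \<epsilon>(j := 0)"
    "label \<epsilon> ` f = signed_labels \<epsilon>"
proof -
  obtain j s a where \<epsilon>: "\<epsilon> \<in> orthants k" and j: "j \<in> support \<epsilon>" "\<forall>x\<in>f. x j = p"
    and s: "ksimplex_on p (support \<epsilon>) s" "a \<in> s" "f = s - {a}"
    and "label \<epsilon> ` f = signed_labels \<epsilon>"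
    using assms unfolding inner_doors_at_def inner_doors_def facets_def by blast
  moreover have "ksimplex_on p (support \<epsilon> - {j}) f"
    using \<epsilon> j s ksimplex_on_top_facet[OF _ j(1) p_pos j(2)] finite_support
    unfolding orthants_def by blast
  ultimately show ?thesis using that facet_orthant_eq[OF j] by blast
qed

lemma labels_facet_orthant:
  assumes "(\<epsilon>, f) \<in> inner_doors_at k"
  shows "label (facet_orthant \<epsilon> f) ` f = signed_labels \<epsilon>"
proof -
  obtain j where j: "\<forall>x\<in>f. x j = p" and \<epsilon>': "facet_orthant \<epsilon> f = \<epsilon>(j := 0)"
    and labels: "label \<epsilon> ` f = signed_labels \<epsilon>"
    using assms by (rule inner_doors_atE)
  have "label (\<epsilon>(j := 0)) ` f = label \<epsilon> ` f"
    using label_upd_centre j by (intro image_cong) auto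
  then show ?thesis unfolding \<epsilon>' labels .
qed

lemma inner_door_imp_fully_labelled:
  assumes "(\<epsilon>, f) \<in> inner_doors_at k" "1 \<le> k"
  shows "(facet_orthant \<epsilon> f, f) \<in> fully_labelled_at (k - 1)"
proof -
  obtain j where \<epsilon>: "\<epsilon> \<in> orthants k" and j: "j \<in> support \<epsilon>"
    and f: "ksimplex_on p (support \<epsilon> - {j}) f" and \<epsilon>': "facet_orthant \<epsilon> f = \<epsilon>(j := 0)"
    and labels: "label \<epsilon> ` f = signed_labels \<epsilon>"
    using assms(1) by (rule inner_doors_atE)
  have sv: "sign_vector d \<epsilon>" and card_\<epsilon>: "card (support \<epsilon>) = k"
    using \<epsilon> unfolding orthants_def by auto
  have "\<epsilon>(j := 0) \<in> orthants (k - 1)"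
    using sign_vector_upd_0[OF sv] card_\<epsilon> j finite_support[OF sv] unfolding orthants_def by simp
  moreover have "label (\<epsilon>(j := 0)) ` f = signed_labels \<epsilon>"
    using labels_facet_orthant[OF assms(1)] \<epsilon>' by simp
  moreover have "card f = card (signed_labels \<epsilon>)"
    using ksimplex_on_card[OF f] card_signed_labels[OF sv] card_\<epsilon> j finite_support[OF sv] assms(2)
    by simp
  ultimately have "inj_on (label (\<epsilon>(j := 0))) f"
    using eq_card_imp_inj_on[OF ksimplex_on_finite[OF f], of "label (\<epsilon>(j := 0))"] by simp
  then show ?thesis
    using f signed_labels_upd_0_subset[of \<epsilon> j] \<open>\<epsilon>(j := 0) \<in> orthants (k - 1)\<close>
      \<open>label (\<epsilon>(j := 0)) ` f = signed_labels \<epsilon>\<close> \<epsilon>'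
    unfolding fully_labelled_at_def fully_labelled_def by auto
qed

lemma inj_on_facet_orthant: "inj_on (\<lambda>(\<epsilon>, f). (facet_orthant \<epsilon> f, f)) (inner_doors_at k)"
proof (rule inj_onI, clarsimp)
  fix \<epsilon>\<^sub>1 \<epsilon>\<^sub>2 f
  assume doors: "(\<epsilon>\<^sub>1, f) \<in> inner_doors_at k" "(\<epsilon>\<^sub>2, f) \<in> inner_doors_at k"
    and "facet_orthant \<epsilon>\<^sub>1 f = facet_orthant \<epsilon>\<^sub>2 f"
  then have "signed_labels \<epsilon>\<^sub>1 = signed_labels \<epsilon>\<^sub>2"
    using labels_facet_orthant by metis
  moreover have "sign_vector d \<epsilon>\<^sub>1" "sign_vector d \<epsilon>\<^sub>2"
    using doors unfolding inner_doors_at_def orthants_def by auto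
  ultimately show "\<epsilon>\<^sub>1 = \<epsilon>\<^sub>2" by (rule signed_labels_inj[rotated 2])
qed

lemma missing_label:
  assumes "complementary_free" "sign_vector d \<epsilon>" "ksimplex_on p (support \<epsilon>) s" "u \<in> s"
    "label \<epsilon> u \<notin> signed_labels \<epsilon>" "signed_labels \<epsilon> \<subseteq> label \<epsilon> ` s"
  shows "nat \<bar>label \<epsilon> u\<bar> - 1 < d" "\<epsilon> (nat \<bar>label \<epsilon> u\<bar> - 1) = 0"
proof -
  define l where "l = label \<epsilon> u"
  define i where "i = nat \<bar>l\<bar> - 1"
  have range: "1 \<le> \<bar>l\<bar>" "\<bar>l\<bar> \<le> int d"
    using label_range[OF assms(2-4)] unfolding l_def label_def by auto
  then show "nat \<bar>label \<epsilon> u\<bar> - 1 < d" unfolding l_def[symmetric] by linarith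
  show "\<epsilon> (nat \<bar>label \<epsilon> u\<bar> - 1) = 0"
  proof (rule ccontr)
    assume nonzero: "\<epsilon> (nat \<bar>label \<epsilon> u\<bar> - 1) \<noteq> 0"
    have "l \<noteq> 0" using range by auto
    then have "\<epsilon> i \<noteq> sgn l"
      using assms(5) mem_signed_labels[OF assms(2), of l] unfolding l_def i_def by simp
    moreover have "\<epsilon> i = 1 \<or> \<epsilon> i = -1"
      using sign_vector_nonzero[OF assms(2) nonzero] unfolding l_def i_def .
    ultimately have "\<epsilon> (nat \<bar>- l\<bar> - 1) = sgn (- l)"
      using \<open>l \<noteq> 0\<close> unfolding i_def by (auto simp: sgn_if)
    then have "- l \<in> label \<epsilon> ` s"
      using assms(6) mem_signed_labels[OF assms(2)] \<open>l \<noteq> 0\<close> by auto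
    then obtain v where "v \<in> s" "label \<epsilon> v = - label \<epsilon> u" unfolding l_def by auto
    then show False using assms(1-4) unfolding complementary_free_def by blast
  qed
qed

lemma fully_labelled_at_top_empty:
  assumes "complementary_free"
  shows "fully_labelled_at d = {}"
proof (rule equals0I)
  fix x assume "x \<in> fully_labelled_at d"
  then obtain \<epsilon> s where \<epsilon>: "sign_vector d \<epsilon>" "card (support \<epsilon>) = d"
    and s: "ksimplex_on p (support \<epsilon>) s" "signed_labels \<epsilon> \<subseteq> label \<epsilon> ` s" "inj_on (label \<epsilon>) s"
    unfolding fully_labelled_at_def orthants_def fully_labelled_def by auto
  have "card (signed_labels \<epsilon>) < card s"
    using ksimplex_on_card[OF s(1)] card_signed_labels[OF \<epsilon>(1)] by simp
  then obtain u where u: "u \<in> s" "label \<epsilon> u \<notin> signed_labels \<epsilon>"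
    using inj_on_ex_image_notin[OF s(3)] finite_support[OF \<epsilon>(1)] unfolding signed_labels_def by blast
  have "support \<epsilon> = {..<d}"
    using card_subset_eq[OF _ support_subset_lessThan[OF \<epsilon>(1)]] \<epsilon>(2) by simp
  then show False
    using missing_label[OF assms \<epsilon>(1) s(1) u s(2)] unfolding support_def by auto
qed

lemma card_fully_labelled_at_0: "card (fully_labelled_at 0) = 1"
proof -
  have "orthants 0 = {\<lambda>_. 0}"
    using finite_support unfolding orthants_def
    by (auto simp: support_def sign_vector_def fun_eq_iff)
  moreover have "ksimplex_on p {} s \<longleftrightarrow> s = {\<lambda>_. p}" for s
    unfolding ksimplex_on_def using ksimplex_0 by (auto simp: o_def intro!: exI[of _ id])
  then have "fully_labelled (\<lambda>_. 0) = {{\<lambda>_. p}}"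
    unfolding fully_labelled_def by (auto simp: support_def signed_labels_def)
  ultimately show ?thesis unfolding fully_labelled_at_def by simp
qed

lemma fully_labelled_extra_label:
  assumes "complementary_free" "sign_vector d \<epsilon>" "ksimplex_on p (support \<epsilon>) f"
    "signed_labels \<epsilon> \<subseteq> label \<epsilon> ` f" "inj_on (label \<epsilon>) f"
  obtains l where "label \<epsilon> ` f = insert l (signed_labels \<epsilon>)" "l \<notin> signed_labels \<epsilon>" "l \<noteq> 0"
    "nat \<bar>l\<bar> - 1 < d" "\<epsilon> (nat \<bar>l\<bar> - 1) = 0"
proof -
  have card_f: "card f = Suc (card (signed_labels \<epsilon>))"
    using ksimplex_on_card[OF assms(3)] card_signed_labels[OF assms(2)] by simp
  have "finite (signed_labels \<epsilon>)" unfolding signed_labels_def using finite_support[OF assms(2)] by simp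
  moreover have "card (signed_labels \<epsilon>) < card f" using card_f by simp
  ultimately obtain u where u: "u \<in> f" "label \<epsilon> u \<notin> signed_labels \<epsilon>"
    using inj_on_ex_image_notin[OF assms(5)] by blast
  have "label \<epsilon> ` f = insert (label \<epsilon> u) (signed_labels \<epsilon>)"
  proof (rule card_subset_eq[symmetric])
    show "finite (label \<epsilon> ` f)" using ksimplex_on_finite[OF assms(3)] by simp
    show "insert (label \<epsilon> u) (signed_labels \<epsilon>) \<subseteq> label \<epsilon> ` f" using assms(4) u(1) by blast
    show "card (insert (label \<epsilon> u) (signed_labels \<epsilon>)) = card (label \<epsilon> ` f)"
      using card_f u(2) assms(5) \<open>finite (signed_labels \<epsilon>)\<close> by (simp add: card_image)
  qed
  moreover have "label \<epsilon> u \<noteq> 0"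
    using label_range[OF assms(2,3) u(1)] unfolding label_def by auto
  ultimately show ?thesis
    using that u(2) missing_label[OF assms(1-3) u assms(4)] by blast
qed

text \<open>A fully labelled simplex of a lower orthant has exactly one label outside the orthant's labels; that
  label names the orthant of one dimension more in which the simplex is an inner door.\<close>

lemma fully_labelled_imp_inner_door:
  assumes "complementary_free" "(\<epsilon>', f) \<in> fully_labelled_at (k - 1)" "1 \<le> k"
  shows "\<exists>\<epsilon>. (\<epsilon>, f) \<in> inner_doors_at k \<and> facet_orthant \<epsilon> f = \<epsilon>'"
proof -
  have sv': "sign_vector d \<epsilon>'" and card_\<epsilon>': "card (support \<epsilon>') = k - 1"
    and f: "ksimplex_on p (support \<epsilon>') f" "signed_labels \<epsilon>' \<subseteq> label \<epsilon>' ` f" "inj_on (label \<epsilon>') f"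
    using assms(2) unfolding fully_labelled_at_def orthants_def fully_labelled_def by auto
  obtain l where labels: "label \<epsilon>' ` f = insert l (signed_labels \<epsilon>')" and "l \<noteq> 0"
    and i: "nat \<bar>l\<bar> - 1 < d" "\<epsilon>' (nat \<bar>l\<bar> - 1) = 0"
    using fully_labelled_extra_label[OF assms(1) sv' f] .
  define i where "i = nat \<bar>l\<bar> - 1"
  define \<epsilon> where "\<epsilon> = \<epsilon>'(i := sgn l)"
  have sgn_l: "sgn l \<noteq> 0" "sgn l * int (Suc i) = l"
    using \<open>l \<noteq> 0\<close> unfolding i_def by (auto simp: sgn_0_0 sgn_mult_abs Suc_diff_1)
  have sv: "sign_vector d \<epsilon>"
    unfolding \<epsilon>_def using sign_vector_upd[OF sv' i(1)[folded i_def]] by (simp add: sgn_if)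
  have i_notin: "i \<notin> support \<epsilon>'" using i(2) unfolding support_def i_def by simp
  have support: "support \<epsilon> = insert i (support \<epsilon>')"
    unfolding \<epsilon>_def using support_upd_nonzero[OF sgn_l(1)] .
  have "card (support \<epsilon>) = k"
    using card_\<epsilon>' assms(3) i_notin finite_support[OF sv'] unfolding support by simp
  then have "\<epsilon> \<in> orthants k" unfolding orthants_def using sv by simp
  have centre: "\<forall>x\<in>f. x i = p" using ksimplex_on_eq_p[OF f(1)] i_notin by blast
  have "f \<in> facets \<epsilon>"
    using ksimplex_on_top_facet[OF finite_support[OF sv] _ p_pos centre] f(1) i_notin
    unfolding facets_def support by (simp add: Bex_def)
  moreover have "label \<epsilon> ` f = label \<epsilon>' ` f"
    unfolding \<epsilon>_def using label_upd_centre centre by (intro image_cong) auto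
  moreover have "signed_labels \<epsilon> = insert l (signed_labels \<epsilon>')"
    unfolding \<epsilon>_def signed_labels_upd_nonzero[of \<epsilon>' i, OF i(2)[folded i_def] sgn_l(1)] sgn_l(2) ..
  ultimately have "(\<epsilon>, f) \<in> inner_doors_at k"
    using \<open>\<epsilon> \<in> orthants k\<close> centre support labels
    unfolding inner_doors_at_def inner_doors_def by auto
  moreover have "facet_orthant \<epsilon> f = \<epsilon>'"
    using facet_orthant_eq[of i \<epsilon> f] centre f(1) support i_notin i(2)
    unfolding \<epsilon>_def i_def by (auto simp: fun_eq_iff)
  ultimately show ?thesis by blast
qed

lemma card_inner_doors_at:
  assumes "complementary_free" "1 \<le> k"
  shows "card (inner_doors_at k) = card (fully_labelled_at (k - 1))"
proof -
  have "(\<lambda>(\<epsilon>, f). (facet_orthant \<epsilon> f, f)) ` inner_doors_at k = fully_labelled_at (k - 1)"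
  proof (intro equalityI subsetI)
    fix x assume "x \<in> (\<lambda>(\<epsilon>, f). (facet_orthant \<epsilon> f, f)) ` inner_doors_at k"
    then obtain \<epsilon> f where "(\<epsilon>, f) \<in> inner_doors_at k" "x = (facet_orthant \<epsilon> f, f)" by auto
    then show "x \<in> fully_labelled_at (k - 1)"
      using inner_door_imp_fully_labelled assms(2) by simp
  next
    fix x assume x: "x \<in> fully_labelled_at (k - 1)"
    obtain \<epsilon>' f where x_eq: "x = (\<epsilon>', f)" by (cases x)
    then obtain \<epsilon> where "(\<epsilon>, f) \<in> inner_doors_at k" "facet_orthant \<epsilon> f = \<epsilon>'"
      using fully_labelled_imp_inner_door[OF assms(1) _ assms(2)] x by blast
    then show "x \<in> (\<lambda>(\<epsilon>, f). (facet_orthant \<epsilon> f, f)) ` inner_doors_at k"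
      using x_eq by (intro image_eqI[where x = "(\<epsilon>, f)"]) simp_all
  qed
  then show ?thesis using card_image[OF inj_on_facet_orthant[of k]] by simp
qed

lemma odd_card_fully_labelled_at:
  assumes "complementary_free"
  shows "k \<le> d \<Longrightarrow> odd (card (fully_labelled_at k))"
proof (induction k)
  case 0
  then show ?case by (simp add: card_fully_labelled_at_0)
next
  case (Suc k)
  have "even (card (fully_labelled_at (Suc k)) + card (inner_doors_at (Suc k))
      + card (outer_doors_at (Suc k)))"
    by (rule even_card_level) simp
  moreover have "even (card (outer_doors_at (Suc k)))" by (rule even_card_outer_doors_at) simp
  moreover have "card (inner_doors_at (Suc k)) = card (fully_labelled_at k)"
    using card_inner_doors_at[OF assms, of "Suc k"] by simp
  moreover have "odd (card (fully_labelled_at k))" using Suc by simp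
  moreover have "odd a" if "even (a + b + c)" "even c" "b = b'" "odd b'" for a b c b' :: nat
    using that by presburger
  ultimately show ?case by blast
qed

lemma not_complementary_free: "\<not> complementary_free"
  using odd_card_fully_labelled_at[of d] fully_labelled_at_top_empty by auto

end

theorem tucker_grid:
  fixes d p :: nat and lam :: "(nat \<Rightarrow> int) \<Rightarrow> int"
  assumes "0 < p"
    and "\<And>\<epsilon> s w. sign_vector d \<epsilon> \<Longrightarrow> ksimplex_on p (support \<epsilon>) s \<Longrightarrow> w \<in> s \<Longrightarrow>
      1 \<le> \<bar>lam (orthant_point p \<epsilon> w)\<bar> \<and> \<bar>lam (orthant_point p \<epsilon> w)\<bar> \<le> int d"
    and "\<And>\<epsilon> s w j. sign_vector d \<epsilon> \<Longrightarrow> ksimplex_on p (support \<epsilon>) s \<Longrightarrow> w \<in> s \<Longrightarrow>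
      \<epsilon> j \<noteq> 0 \<Longrightarrow> w j = 0 \<Longrightarrow> lam (- orthant_point p \<epsilon> w) = - lam (orthant_point p \<epsilon> w)"
  shows "\<exists>\<epsilon> s u v. sign_vector d \<epsilon> \<and> ksimplex_on p (support \<epsilon>) s \<and> u \<in> s \<and> v \<in> s
    \<and> lam (orthant_point p \<epsilon> u) = - lam (orthant_point p \<epsilon> v)"
proof -
  interpret tucker_labelling d p lam using assms by unfold_locales
  show ?thesis using not_complementary_free unfolding complementary_free_def label_def by blast
qed

section \<open>Necklace splitting\<close>

lemma int_quotient_close:
  fixes a a' D D' q q' m M d :: int
  assumes "0 \<le> a" "a \<le> D" "D' - D \<le> 2*d" "a - a' \<le> d" "M \<le> D'" "0 < D" "0 < D'"
    "m*(3*d) \<le> M" "0 \<le> m" "0 \<le> d" "q * D \<le> m*a" "m*a' < (q'+1)*D'"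
  shows "q \<le> q' + 1"
proof (rule ccontr)
  assume "\<not> q \<le> q' + 1"
  then have qq: "q' + 2 \<le> q" by simp
  have h1: "a*(D' - D) \<le> a*(2*d)" using assms(1,3) by (rule mult_left_mono[rotated])
  have h2: "D*(a - a') \<le> D*d" using assms(4,6) by (intro mult_left_mono) auto
  have h3: "a*(2*d) \<le> D*(2*d)" using assms(2,10) by (intro mult_right_mono) auto
  have id1: "a*D' - a'*D = a*(D' - D) + D*(a - a')" by (simp add: algebra_simps)
  have h4: "a*D' - a'*D \<le> D*(3*d)" using h1 h2 h3 id1 by (simp add: algebra_simps)
  have h5: "m*(a*D' - a'*D) \<le> m*(D*(3*d))" using h4 assms(9) by (rule mult_left_mono)
  have h6: "m*(D*(3*d)) = (m*(3*d))*D" by (simp add: algebra_simps)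
  have h7: "(m*(3*d))*D \<le> M*D" using assms(8,6) by (intro mult_right_mono) auto
  have h8: "M*D \<le> D'*D" using assms(5,6) by (intro mult_right_mono) auto
  have A1: "m*a*D' - m*a'*D \<le> D'*D" using h5 h6 h7 h8 by (simp add: algebra_simps)
  have h9: "q*D*D' \<le> m*a*D'" using assms(11,7) by (intro mult_right_mono) auto
  have h10: "m*a'*D < (q'+1)*D'*D" using assms(12,6) by (intro mult_strict_right_mono) auto
  have h11: "(q'+2)*(D*D') \<le> q*(D*D')" using qq assms(6,7) by (intro mult_right_mono) auto
  have "m*a*D' - m*a'*D > q*D*D' - (q'+1)*D'*D" using h9 h10 by linarith
  moreover have "q*D*D' - (q'+1)*D'*D \<ge> D*D'" using h11 by (simp add: algebra_simps)
  ultimately show False using A1 by (simp add: algebra_simps)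
qed

lemma mult_div_close:
  fixes a a' D D' m d M :: nat
  assumes "a \<le> D" "D' \<le> D + 2 * d" "a \<le> a' + d" "M \<le> D'" "0 < D" "0 < D'" "m * (3 * d) \<le> M"
  shows "m * a div D \<le> m * a' div D' + 1"
proof -
  have "m * a div D * D \<le> m * a" by (rule div_times_less_eq_dividend)
  moreover have "m * a' < (m * a' div D' + 1) * D'"
    using dividend_less_times_div[OF assms(6), of "m * a'"] by (simp add: algebra_simps)
  ultimately have "int (m * a div D) \<le> int (m * a' div D') + 1"
  proof (intro int_quotient_close[where a = "int a" and a' = "int a'" and D = "int D"
        and D' = "int D'" and m = "int m" and M = "int M" and d = "int d"])
    have "int (m * a div D * D) \<le> int (m * a)"
      using \<open>m * a div D * D \<le> m * a\<close> by (simp only: of_nat_le_iff)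
    then show "int (m * a div D) * int D \<le> int m * int a" by simp
    have "int (m * a') < int ((m * a' div D' + 1) * D')"
      using \<open>m * a' < (m * a' div D' + 1) * D'\<close> by (simp only: of_nat_less_iff)
    then show "int m * int a' < (int (m * a' div D') + 1) * int D'" by (simp add: algebra_simps)
    have "int (m * (3 * d)) \<le> int M" using assms(7) by (simp only: of_nat_le_iff)
    then show "int m * (3 * int d) \<le> int M" by simp
    show "int D' - int D \<le> 2 * int d" using assms(2) by linarith
    show "int a - int a' \<le> int d" using assms(3) by linarith
    show "0 \<le> int a" "0 \<le> int m" "0 \<le> int d" by simp_all
    show "int a \<le> int D" "int M \<le> int D'" "0 < int D" "0 < int D'" using assms by simp_all
  qed
  then show ?thesis by simp
qed

lemma half_bounds_if_abs_le:
  fixes S T c :: real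
  assumes "\<bar>T - 2 * S\<bar> \<le> 4 * c"
  shows "- 2 * c + T / 2 \<le> S \<and> S \<le> 2 * c + T / 2"
  using assms by (simp add: abs_le_iff)

text \<open>A point \<open>g\<close> of the box \<open>[-M, M]\<^sup>d\<close> describes a division of a string of length \<open>total_len g\<close> into
  consecutive pieces of lengths \<open>\<bar>g 0\<bar>, \<dots>, \<bar>g (d - 1)\<bar>\<close> and a final piece of length \<open>d (M - max \<bar>g i\<bar>)\<close>;
  scaled to the beads \<open>1, \<dots>, m\<close>, the piece \<open>r < d\<close> ends after bead \<open>cut g (r + 1)\<close>. The final piece keeps the total length at least \<open>M\<close>, so that for
  \<open>M = 3 d m\<close> a unit move of \<open>g\<close> shifts every cut by at most one bead (\<open>cut_close\<close>); it vanishes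
  exactly on the boundary of the box, where therefore \<open>g\<close> and \<open>-g\<close> give every bead opposite signs.\<close>

locale necklace =
  fixes n m :: nat and x y :: "nat \<Rightarrow> nat \<Rightarrow> nat" and z :: "nat \<Rightarrow> nat"
  assumes n_pos: "n \<ge> 1" and m_pos: "m \<ge> 1"
    and x_le_z: "\<forall>i\<in>{1..m}. \<forall>j<2*n. x i j \<le> z j"
    and y_le_z: "\<forall>i\<in>{1..m}. \<forall>j<2*n. y i j \<le> z j"
begin

definition d :: nat where "d = 2 * n"
definition M :: nat where "M = 3 * d * m"

definition in_box :: "(nat \<Rightarrow> int) \<Rightarrow> bool" where
  "in_box g \<longleftrightarrow> (\<forall>i. \<bar>g i\<bar> \<le> int M) \<and> (\<forall>i\<ge>d. g i = 0)"

definition piece_len :: "(nat \<Rightarrow> int) \<Rightarrow> nat \<Rightarrow> nat" where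
  "piece_len g i = nat \<bar>g i\<bar>"

definition prefix_len :: "(nat \<Rightarrow> int) \<Rightarrow> nat \<Rightarrow> nat" where
  "prefix_len g k = (\<Sum>i<k. piece_len g i)"

definition max_piece :: "(nat \<Rightarrow> int) \<Rightarrow> nat" where
  "max_piece g = Max (piece_len g ` {..<d})"

definition total_len :: "(nat \<Rightarrow> int) \<Rightarrow> nat" where
  "total_len g = prefix_len g d + d * (M - max_piece g)"

definition cut :: "(nat \<Rightarrow> int) \<Rightarrow> nat \<Rightarrow> nat" where
  "cut g k = m * prefix_len g k div total_len g"

definition in_run :: "(nat \<Rightarrow> int) \<Rightarrow> nat \<Rightarrow> nat \<Rightarrow> bool" where
  "in_run g r b \<longleftrightarrow> cut g r < b \<and> b \<le> cut g (Suc r)"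

definition negative :: "(nat \<Rightarrow> int) \<Rightarrow> nat \<Rightarrow> bool" where
  "negative g b \<longleftrightarrow> (\<exists>r<d. in_run g r b \<and> g r < 0)"

definition bead_sign :: "(nat \<Rightarrow> int) \<Rightarrow> nat \<Rightarrow> int" where
  "bead_sign g b = (if negative g b then -1 else 1)"

definition discrepancy :: "(nat \<Rightarrow> int) \<Rightarrow> nat \<Rightarrow> int" where
  "discrepancy g j = (\<Sum>b\<in>{1..m}. bead_sign g b * (int (x b j) - int (y b j)))"

lemma d_pos: "1 \<le> d" unfolding d_def using n_pos by simp
lemma M_pos: "0 < M" unfolding M_def using d_pos m_pos by simp

lemma piece_len_le_M: "in_box g \<Longrightarrow> piece_len g i \<le> M"
  unfolding in_box_def piece_len_def by (metis nat_le_iff)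

lemma piece_lens_nonempty: "piece_len g ` {..<d} \<noteq> {}"
  using d_pos by (simp add: lessThan_empty_iff)

lemma max_piece_le_M: "in_box g \<Longrightarrow> max_piece g \<le> M"
  unfolding max_piece_def using piece_len_le_M piece_lens_nonempty by (simp add: Max_le_iff)

lemma piece_len_le_max_piece: "i < d \<Longrightarrow> piece_len g i \<le> max_piece g"
  unfolding max_piece_def by (simp add: Max_ge)

lemma prefix_len_mono: "k \<le> k' \<Longrightarrow> prefix_len g k \<le> prefix_len g k'"
  unfolding prefix_len_def by (rule sum_mono2) auto

lemma prefix_len_Suc: "prefix_len g (Suc k) = prefix_len g k + piece_len g k"
  unfolding prefix_len_def by simp

lemma max_piece_le_prefix_len: "max_piece g \<le> prefix_len g d"
proof -
  obtain i where i: "i < d" "max_piece g = piece_len g i"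
    using Max_in[OF _ piece_lens_nonempty, of g] unfolding max_piece_def by auto
  have "piece_len g i \<le> prefix_len g d" unfolding prefix_len_def using i(1) by (intro member_le_sum) auto
  then show ?thesis using i by simp
qed

lemma M_le_total_len: "in_box g \<Longrightarrow> M \<le> total_len g"
proof -
  assume b: "in_box g"
  have "max_piece g \<le> M" using max_piece_le_M[OF b] .
  have "M = max_piece g + (M - max_piece g)" using \<open>max_piece g \<le> M\<close> by simp
  also have "\<dots> \<le> prefix_len g d + d * (M - max_piece g)" using max_piece_le_prefix_len d_pos by (intro add_mono) auto
  finally show ?thesis unfolding total_len_def .
qed

lemma total_len_pos: "in_box g \<Longrightarrow> 0 < total_len g"
  using M_le_total_len M_pos by (meson less_le_trans)

lemma prefix_len_le_total_len: "k \<le> d \<Longrightarrow> prefix_len g k \<le> total_len g"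
  unfolding total_len_def using prefix_len_mono[of k d g] by simp

lemma cut_0: "cut g 0 = 0"
  unfolding cut_def prefix_len_def by simp

lemma cut_mono: "k \<le> k' \<Longrightarrow> cut g k \<le> cut g k'"
  unfolding cut_def using prefix_len_mono by (intro div_le_mono mult_le_mono2) auto

lemma cut_le_m: "in_box g \<Longrightarrow> k \<le> d \<Longrightarrow> cut g k \<le> m"
proof -
  assume b: "in_box g" and k: "k \<le> d"
  have "m * prefix_len g k \<le> m * total_len g" using prefix_len_le_total_len[OF k] by simp
  then have "(m * prefix_len g k) div total_len g \<le> (m * total_len g) div total_len g" by (rule div_le_mono)
  then show ?thesis unfolding cut_def using total_len_pos[OF b] by simp
qed

lemma cut_d_eq_m:
  assumes b: "in_box g" and i: "i < d" "\<bar>g i\<bar> = int M"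
  shows "cut g d = m"
proof -
  have "piece_len g i = M" unfolding piece_len_def using i(2) by simp
  then have "max_piece g = M" using piece_len_le_max_piece[OF i(1), of g] max_piece_le_M[OF b] by simp
  then have "total_len g = prefix_len g d" unfolding total_len_def by simp
  then show ?thesis unfolding cut_def using total_len_pos[OF b] by simp
qed

lemma piece_len_close: "\<bar>g i - g' i\<bar> \<le> 1 \<Longrightarrow> piece_len g i \<le> piece_len g' i + 1"
  unfolding piece_len_def by linarith

lemma prefix_len_close:
  assumes "\<forall>i. \<bar>g i - g' i\<bar> \<le> 1" shows "prefix_len g k \<le> prefix_len g' k + k"
proof -
  have "prefix_len g k \<le> (\<Sum>i<k. piece_len g' i + 1)" unfolding prefix_len_def using piece_len_close assms by (intro sum_mono) auto
  also have "\<dots> = (\<Sum>i<k. piece_len g' i) + (\<Sum>i<k. (1::nat))" by (rule sum.distrib)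
  also have "\<dots> = prefix_len g' k + k" unfolding prefix_len_def by simp
  finally show ?thesis .
qed

lemma max_piece_close:
  assumes "\<forall>i. \<bar>g i - g' i\<bar> \<le> 1" shows "max_piece g \<le> max_piece g' + 1"
proof -
  have "\<forall>v\<in>piece_len g ` {..<d}. v \<le> max_piece g' + 1"
  proof
    fix v assume "v \<in> piece_len g ` {..<d}"
    then obtain i where i: "i < d" "v = piece_len g i" by blast
    have "piece_len g i \<le> piece_len g' i + 1" using piece_len_close assms by blast
    also have "\<dots> \<le> max_piece g' + 1" using piece_len_le_max_piece[OF i(1)] by simp
    finally show "v \<le> max_piece g' + 1" using i by simp
  qed
  then show ?thesis unfolding max_piece_def[of g] using piece_lens_nonempty by (simp add: Max_le_iff)
qed

lemma total_len_close:
  assumes "\<forall>i. \<bar>g i - g' i\<bar> \<le> 1" "in_box g" "in_box g'"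
  shows "int (total_len g) - int (total_len g') \<le> 2 * int d"
proof -
  have s: "\<forall>i. \<bar>g' i - g i\<bar> \<le> 1" using assms(1) by (simp add: abs_minus_commute)
  have a: "prefix_len g d \<le> prefix_len g' d + d" using prefix_len_close[OF assms(1)] .
  have b: "max_piece g' \<le> max_piece g + 1" using max_piece_close[OF s] .
  have "M - max_piece g \<le> M - max_piece g' + 1" using b by simp
  then have "d * (M - max_piece g) \<le> d * (M - max_piece g') + d" using mult_le_mono2[of "M - max_piece g" "M - max_piece g' + 1" d] by simp
  then have "total_len g \<le> total_len g' + 2 * d" unfolding total_len_def using a by simp
  then show ?thesis by linarith
qed

lemma cut_close:
  assumes "\<forall>i. \<bar>g i - g' i\<bar> \<le> 1" "in_box g" "in_box g'" "k \<le> d"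
  shows "cut g k \<le> cut g' k + 1"
  unfolding cut_def
proof (rule mult_div_close)
  show "prefix_len g k \<le> total_len g" using prefix_len_le_total_len[OF assms(4)] .
  show "total_len g' \<le> total_len g + 2 * d"
    using total_len_close[of g' g] assms(1-3) by (simp add: abs_minus_commute)
  show "prefix_len g k \<le> prefix_len g' k + d" using prefix_len_close[OF assms(1), of k] assms(4) by simp
  show "M \<le> total_len g'" using M_le_total_len[OF assms(3)] .
  show "0 < total_len g" "0 < total_len g'" using total_len_pos assms(2,3) by auto
  show "m * (3 * d) \<le> M" unfolding M_def by simp
qed

lemma in_run_nonzero: "in_run g r b \<Longrightarrow> g r \<noteq> 0"
  unfolding in_run_def cut_def by (auto simp: prefix_len_Suc piece_len_def)

lemma in_run_unique:
  assumes "in_run g r b" "in_run g r' b"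
  shows "r = r'"
proof (rule ccontr)
  assume "r \<noteq> r'"
  then consider "Suc r \<le> r'" | "Suc r' \<le> r" by linarith
  then show False
  proof cases
    case 1
    then have "cut g (Suc r) \<le> cut g r'" by (rule cut_mono)
    then show False using assms unfolding in_run_def by simp
  next
    case 2
    then have "cut g (Suc r') \<le> cut g r" by (rule cut_mono)
    then show False using assms unfolding in_run_def by simp
  qed
qed

lemma ex_in_run:
  assumes "cut g d = m" "b \<in> {1..m}"
  shows "\<exists>r<d. in_run g r b"
proof -
  define K where "K = {k. k \<le> d \<and> cut g k < b}"
  have "finite K" unfolding K_def by simp
  have "0 \<in> K" unfolding K_def using cut_0 assms(2) by simp
  define r where "r = Max K"
  have "r \<in> K" unfolding r_def using \<open>finite K\<close> \<open>0 \<in> K\<close> by (intro Max_in) auto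
  then have r: "r \<le> d" "cut g r < b" unfolding K_def by auto
  have "r \<noteq> d" using r(2) assms by auto
  then have "r < d" using r(1) by simp
  have "b \<le> cut g (Suc r)"
  proof (rule ccontr)
    assume "\<not> b \<le> cut g (Suc r)"
    then have "Suc r \<in> K" unfolding K_def using \<open>r < d\<close> by simp
    then have "Suc r \<le> r" unfolding r_def using \<open>finite K\<close> by simp
    then show False by simp
  qed
  then show ?thesis using \<open>r < d\<close> r(2) unfolding in_run_def by blast
qed

definition cut_points :: "(nat \<Rightarrow> int) \<Rightarrow> nat set" where
  "cut_points g = cut g ` {1..d}"

lemma negative_transfer:
  assumes close: "\<forall>i. \<bar>g i - g' i\<bar> \<le> 1" and "in_box g" "in_box g'"
    and b: "b \<notin> cut_points g" "b \<notin> cut_points g'" "1 \<le> b" and "negative g b"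
  shows "negative g' b"
proof -
  have close': "\<forall>i. \<bar>g' i - g i\<bar> \<le> 1" using close by (simp add: abs_minus_commute)
  obtain r where r: "r < d" "in_run g r b" "g r < 0" using \<open>negative g b\<close> unfolding negative_def by blast
  have "cut g' r < b"
  proof (cases "r = 0")
    case True
    then show ?thesis using b(3) cut_0 by simp
  next
    case False
    then have "cut g' r \<noteq> b" using b(2) r(1) unfolding cut_points_def by auto
    moreover have "cut g' r \<le> cut g r + 1"
      using cut_close[OF close' \<open>in_box g'\<close> \<open>in_box g\<close>] r(1) by simp
    ultimately show ?thesis using r(2) unfolding in_run_def by simp
  qed
  moreover have "b \<le> cut g' (Suc r)"
  proof -
    have "cut g (Suc r) \<noteq> b" using b(1) r(1) unfolding cut_points_def by auto
    moreover have "cut g (Suc r) \<le> cut g' (Suc r) + 1"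
      using cut_close[OF close \<open>in_box g\<close> \<open>in_box g'\<close>] r(1) by simp
    ultimately show ?thesis using r(2) unfolding in_run_def by simp
  qed
  ultimately have "in_run g' r b" unfolding in_run_def by simp
  moreover have "g' r < 0"
    using in_run_nonzero[OF \<open>in_run g' r b\<close>] r(3) close'[rule_format, of r] by linarith
  ultimately show ?thesis using r(1) unfolding negative_def by blast
qed

lemma bead_sign_eq:
  assumes "\<forall>i. \<bar>g i - g' i\<bar> \<le> 1" "in_box g" "in_box g'"
    and "b \<in> {1..m}" "b \<notin> cut_points g \<union> cut_points g'"
  shows "bead_sign g b = bead_sign g' b"
proof -
  have "\<forall>i. \<bar>g' i - g i\<bar> \<le> 1" using assms(1) by (simp add: abs_minus_commute)
  then have "negative g b \<longleftrightarrow> negative g' b"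
    using negative_transfer[OF assms(1-3), of b] negative_transfer[of g' g b] assms(2-5) by auto
  then show ?thesis unfolding bead_sign_def by simp
qed

lemma abs_bead_diff_le: "b \<in> {1..m} \<Longrightarrow> j < d \<Longrightarrow> \<bar>int (x b j) - int (y b j)\<bar> \<le> int (z j)"
  using x_le_z y_le_z unfolding d_def by fastforce

lemma abs_bead_sign: "\<bar>bead_sign g b\<bar> = 1"
  unfolding bead_sign_def by simp

lemma discrepancy_close:
  assumes cl: "\<forall>i. \<bar>g i - g' i\<bar> \<le> 1" and bx: "in_box g" "in_box g'" and j: "j < d"
  shows "\<bar>discrepancy g j - discrepancy g' j\<bar> \<le> 4 * int d * int (z j)"
proof -
  define B where "B = {1..m} \<inter> (cut_points g \<union> cut_points g')"
  have finB: "finite B" unfolding B_def by simp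
  have "discrepancy g j - discrepancy g' j = (\<Sum>b\<in>{1..m}. (bead_sign g b - bead_sign g' b) * (int (x b j) - int (y b j)))"
    unfolding discrepancy_def by (simp add: sum_subtractf left_diff_distrib)
  also have "\<dots> = (\<Sum>b\<in>B. (bead_sign g b - bead_sign g' b) * (int (x b j) - int (y b j)))"
  proof (rule sum.mono_neutral_right)
    show "finite {1..m}" by simp
    show "B \<subseteq> {1..m}" unfolding B_def by blast
    show "\<forall>b\<in>{1..m} - B. (bead_sign g b - bead_sign g' b) * (int (x b j) - int (y b j)) = 0"
      using bead_sign_eq[OF cl bx] unfolding B_def by simp
  qed
  finally have e: "discrepancy g j - discrepancy g' j = (\<Sum>b\<in>B. (bead_sign g b - bead_sign g' b) * (int (x b j) - int (y b j)))" .
  have "\<bar>\<Sum>b\<in>B. (bead_sign g b - bead_sign g' b) * (int (x b j) - int (y b j))\<bar> \<le> (\<Sum>b\<in>B. \<bar>(bead_sign g b - bead_sign g' b) * (int (x b j) - int (y b j))\<bar>)"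
    by (rule sum_abs)
  also have "\<dots> \<le> (\<Sum>b\<in>B. 2 * int (z j))"
  proof (rule sum_mono)
    fix b assume b: "b \<in> B"
    have "\<bar>bead_sign g b - bead_sign g' b\<bar> \<le> 2" using abs_bead_sign[of g b] abs_bead_sign[of g' b] by linarith
    moreover have "\<bar>(int (x b j) - int (y b j))\<bar> \<le> int (z j)" using abs_bead_diff_le[OF _ j] b unfolding B_def by blast
    ultimately have "\<bar>bead_sign g b - bead_sign g' b\<bar> * \<bar>(int (x b j) - int (y b j))\<bar> \<le> 2 * int (z j)"
      by (intro mult_mono) auto
    then show "\<bar>(bead_sign g b - bead_sign g' b) * (int (x b j) - int (y b j))\<bar> \<le> 2 * int (z j)" by (simp add: abs_mult)
  qed
  also have "\<dots> = int (card B) * (2 * int (z j))" by simp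
  also have "\<dots> \<le> int (2 * d) * (2 * int (z j))"
  proof (rule mult_right_mono)
    have "card B \<le> card (cut_points g \<union> cut_points g')" unfolding B_def by (intro card_mono) (auto simp: cut_points_def)
    also have "\<dots> \<le> card (cut_points g) + card (cut_points g')" by (rule card_Un_le)
    also have "\<dots> \<le> card {1..d} + card {1..d}" unfolding cut_points_def by (intro add_mono card_image_le) auto
    finally show "int (card B) \<le> int (2 * d)" by simp
  qed simp
  finally show ?thesis using e by (simp add: algebra_simps)
qed

lemma cut_uminus: "cut (\<lambda>i. - g i) = cut g"
  unfolding cut_def total_len_def max_piece_def prefix_len_def piece_len_def by simp

lemma bead_sign_uminus:
  assumes "in_box g" "i < d" "\<bar>g i\<bar> = int M" "b \<in> {1..m}"
  shows "bead_sign (\<lambda>i. - g i) b = - bead_sign g b"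
proof -
  obtain r where r: "r < d" "in_run g r b"
    using ex_in_run[OF cut_d_eq_m[OF assms(1-3)] assms(4)] by blast
  have "negative g' b \<longleftrightarrow> g' r < 0" if "cut g' = cut g" for g'
  proof
    assume "negative g' b"
    then obtain r' where "in_run g' r' b" "g' r' < 0" unfolding negative_def by blast
    moreover have "r' = r" using in_run_unique[OF r(2)] \<open>in_run g' r' b\<close>
      unfolding in_run_def that by simp
    ultimately show "g' r < 0" by simp
  next
    assume "g' r < 0"
    then show "negative g' b" using r unfolding negative_def in_run_def that by blast
  qed
  then have "negative g b \<longleftrightarrow> g r < 0" "negative (\<lambda>i. - g i) b \<longleftrightarrow> g r > 0"
    using cut_uminus by auto
  then show ?thesis using in_run_nonzero[OF r(2)] unfolding bead_sign_def by auto
qed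

lemma discrepancy_uminus:
  assumes "in_box g" "i < d" "\<bar>g i\<bar> = int M"
  shows "discrepancy (\<lambda>i. - g i) j = - discrepancy g j"
  unfolding discrepancy_def using bead_sign_uminus[OF assms] by (simp add: sum_negf[symmetric])

definition tolerance :: "nat \<Rightarrow> int" where
  "tolerance j = 2 * int d * int (z j)"

definition unbalanced :: "(nat \<Rightarrow> int) \<Rightarrow> bool" where
  "unbalanced g \<longleftrightarrow> (\<exists>j<d. tolerance j < \<bar>discrepancy g j\<bar>)"

definition first_unbalanced :: "(nat \<Rightarrow> int) \<Rightarrow> nat" where
  "first_unbalanced g = (LEAST j. j < d \<and> tolerance j < \<bar>discrepancy g j\<bar>)"

definition tucker_label :: "(nat \<Rightarrow> int) \<Rightarrow> int" where
  "tucker_label g = (if unbalanced g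
    then sgn (discrepancy g (first_unbalanced g)) * int (Suc (first_unbalanced g)) else 1)"

lemma first_unbalanced:
  assumes "unbalanced g" shows "first_unbalanced g < d" "tolerance (first_unbalanced g) < \<bar>discrepancy g (first_unbalanced g)\<bar>"
proof -
  have "\<exists>j. j < d \<and> tolerance j < \<bar>discrepancy g j\<bar>" using assms unfolding unbalanced_def by blast
  then have "first_unbalanced g < d \<and> tolerance (first_unbalanced g) < \<bar>discrepancy g (first_unbalanced g)\<bar>" unfolding first_unbalanced_def by (rule LeastI_ex)
  then show "first_unbalanced g < d" "tolerance (first_unbalanced g) < \<bar>discrepancy g (first_unbalanced g)\<bar>" by auto
qed

lemma tolerance_nonneg: "0 \<le> tolerance j" unfolding tolerance_def by simp

lemma abs_tucker_label:
  assumes "unbalanced g" shows "\<bar>tucker_label g\<bar> = int (Suc (first_unbalanced g))"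
proof -
  have "discrepancy g (first_unbalanced g) \<noteq> 0" using first_unbalanced[OF assms] tolerance_nonneg[of "first_unbalanced g"] by auto
  then have "\<bar>sgn (discrepancy g (first_unbalanced g))\<bar> = 1" by (simp add: abs_sgn_eq)
  then show ?thesis unfolding tucker_label_def using assms by (simp add: abs_mult)
qed

lemma tucker_label_uminus:
  assumes "in_box g" "i < d" "\<bar>g i\<bar> = int M" "unbalanced g"
  shows "tucker_label (\<lambda>i. - g i) = - tucker_label g"
proof -
  have "discrepancy (\<lambda>i. - g i) = (\<lambda>j. - discrepancy g j)"
    using discrepancy_uminus[OF assms(1-3)] by (simp add: fun_eq_iff)
  then have "unbalanced (\<lambda>i. - g i)" "first_unbalanced (\<lambda>i. - g i) = first_unbalanced g"
    using assms(4) unfolding unbalanced_def first_unbalanced_def by simp_all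
  then show ?thesis
    unfolding tucker_label_def using assms(4) \<open>discrepancy (\<lambda>i. - g i) = _\<close> by (simp add: sgn_minus)
qed

text \<open>Complementary labels force discrepancies of opposite signs beyond the tolerance, which differ by more
  than \<open>discrepancy_close\<close> allows.\<close>

lemma tucker_label_not_complementary:
  assumes "\<forall>i. \<bar>g i - g' i\<bar> \<le> 1" "in_box g" "in_box g'" "unbalanced g" "unbalanced g'"
  shows "tucker_label g \<noteq> - tucker_label g'"
proof
  assume complementary: "tucker_label g = - tucker_label g'"
  then have "int (Suc (first_unbalanced g)) = int (Suc (first_unbalanced g'))"
    using abs_tucker_label[OF assms(4)] abs_tucker_label[OF assms(5)] by simp
  then have same: "first_unbalanced g' = first_unbalanced g" by simp
  define j where "j = first_unbalanced g"
  have j: "j < d" "tolerance j < \<bar>discrepancy g j\<bar>" "tolerance j < \<bar>discrepancy g' j\<bar>"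
    using first_unbalanced[OF assms(4)] first_unbalanced[OF assms(5)] unfolding j_def same by auto
  have "sgn (discrepancy g j) * int (Suc j) = - (sgn (discrepancy g' j) * int (Suc j))"
    using complementary assms(4,5) same unfolding tucker_label_def j_def by simp
  then have "sgn (discrepancy g j) = - sgn (discrepancy g' j)"
    by (metis mult_cancel_right mult_minus_left of_nat_eq_0_iff nat.distinct(1))
  then have "\<bar>discrepancy g j - discrepancy g' j\<bar> = \<bar>discrepancy g j\<bar> + \<bar>discrepancy g' j\<bar>"
    by (auto simp: sgn_if split: if_splits)
  then have "4 * int d * int (z j) < \<bar>discrepancy g j - discrepancy g' j\<bar>"
    using j(2,3) unfolding tolerance_def by simp
  then show False using discrepancy_close[OF assms(1-3) j(1)] by simp
qed

lemma in_box_orthant_point: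
  assumes "sign_vector d \<epsilon>" "ksimplex_on M (support \<epsilon>) s" "w \<in> s"
  shows "in_box (orthant_point M \<epsilon> w)"
proof -
  have "\<bar>orthant_point M \<epsilon> w i\<bar> \<le> int M" for i
  proof -
    have wle: "w i \<le> M" using ksimplex_on_le_p[OF assms(2,3)] .
    have "\<epsilon> i \<in> {-1,0,1}" using assms(1) unfolding sign_vector_def by blast
    then have e: "\<bar>\<epsilon> i\<bar> \<le> 1" by auto
    have "\<bar>orthant_point M \<epsilon> w i\<bar> = \<bar>\<epsilon> i\<bar> * \<bar>int M - int (w i)\<bar>" unfolding orthant_point_def by (simp add: abs_mult)
    also have "\<dots> \<le> 1 * \<bar>int M - int (w i)\<bar>" using e by (intro mult_right_mono) auto
    also have "\<dots> \<le> int M" using wle by simp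
    finally show ?thesis .
  qed
  moreover have "\<forall>i\<ge>d. orthant_point M \<epsilon> w i = 0" using assms(1) unfolding sign_vector_def orthant_point_def by simp
  ultimately show ?thesis unfolding in_box_def by blast
qed

lemma orthant_point_close:
  assumes "sign_vector d \<epsilon>" "ksimplex_on M (support \<epsilon>) s" "u \<in> s" "v \<in> s"
  shows "\<forall>i. \<bar>orthant_point M \<epsilon> u i - orthant_point M \<epsilon> v i\<bar> \<le> 1"
proof
  fix i
  have "\<epsilon> i \<in> {-1,0,1}" using assms(1) unfolding sign_vector_def by blast
  then have e: "\<bar>\<epsilon> i\<bar> \<le> 1" by auto
  have c1: "u i \<le> Suc (v i)" "v i \<le> Suc (u i)" using ksimplex_on_le_Suc[OF assms(2)] assms(3,4) by blast+
  have "\<bar>orthant_point M \<epsilon> u i - orthant_point M \<epsilon> v i\<bar> = \<bar>\<epsilon> i\<bar> * \<bar>int (v i) - int (u i)\<bar>"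
    unfolding orthant_point_def by (simp add: abs_mult[symmetric] algebra_simps)
  also have "\<dots> \<le> 1 * 1" using e c1 by (intro mult_mono) auto
  finally show "\<bar>orthant_point M \<epsilon> u i - orthant_point M \<epsilon> v i\<bar> \<le> 1" by simp
qed

lemma ex_balanced: "\<exists>g. in_box g \<and> \<not> unbalanced g"
proof (rule ccontr)
  assume "\<nexists>g. in_box g \<and> \<not> unbalanced g"
  then have unbalanced: "unbalanced g" if "in_box g" for g using that by blast
  have "\<exists>\<epsilon> s u v. sign_vector d \<epsilon> \<and> ksimplex_on M (support \<epsilon>) s \<and> u \<in> s \<and> v \<in> s
    \<and> tucker_label (orthant_point M \<epsilon> u) = - tucker_label (orthant_point M \<epsilon> v)"
  proof (rule tucker_grid)
    show "0 < M" by (rule M_pos)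
  next
    fix \<epsilon> s w assume w: "sign_vector d \<epsilon>" "ksimplex_on M (support \<epsilon>) s" "w \<in> s"
    then have "unbalanced (orthant_point M \<epsilon> w)" using unbalanced in_box_orthant_point by blast
    then show "1 \<le> \<bar>tucker_label (orthant_point M \<epsilon> w)\<bar> \<and> \<bar>tucker_label (orthant_point M \<epsilon> w)\<bar> \<le> int d"
      using abs_tucker_label first_unbalanced(1) by fastforce
  next
    fix \<epsilon> s w j assume w: "sign_vector d \<epsilon>" "ksimplex_on M (support \<epsilon>) s" "w \<in> s"
      and j: "\<epsilon> j \<noteq> 0" "w j = 0"
    have "j < d" using w(1) j(1) unfolding sign_vector_def by (meson not_le)
    moreover have "\<bar>orthant_point M \<epsilon> w j\<bar> = int M"
      unfolding orthant_point_def using j sign_vector_nonzero[OF w(1) j(1)] by (auto simp: abs_mult)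
    ultimately show "tucker_label (- orthant_point M \<epsilon> w) = - tucker_label (orthant_point M \<epsilon> w)"
      using tucker_label_uminus[OF in_box_orthant_point[OF w]] unbalanced[OF in_box_orthant_point[OF w]]
      by (simp add: fun_Compl_def)
  qed
  then obtain \<epsilon> s u v where "sign_vector d \<epsilon>" "ksimplex_on M (support \<epsilon>) s" "u \<in> s" "v \<in> s"
    "tucker_label (orthant_point M \<epsilon> u) = - tucker_label (orthant_point M \<epsilon> v)" by blast
  then show False
    using tucker_label_not_complementary[OF orthant_point_close in_box_orthant_point in_box_orthant_point]
      unbalanced in_box_orthant_point by metis
qed

text \<open>The negative beads of the runs \<open>2 i - 2\<close> and \<open>2 i - 1\<close> form the interval
  \<open>{interval_start g i..<interval_end g i}\<close>.\<close>

definition interval_start :: "(nat \<Rightarrow> int) \<Rightarrow> nat \<Rightarrow> nat" where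
  "interval_start g i = cut g (if g (2 * i - 2) < 0 then 2 * i - 2 else 2 * i - 1) + 1"

definition interval_end :: "(nat \<Rightarrow> int) \<Rightarrow> nat \<Rightarrow> nat" where
  "interval_end g i = cut g (if g (2 * i - 1) < 0 then 2 * i else 2 * i - 1) + 1"

lemma mem_interval_iff:
  assumes "1 \<le> i"
  shows "b \<in> {interval_start g i..<interval_end g i} \<longleftrightarrow> (\<exists>r\<in>{2 * i - 2, 2 * i - 1}. in_run g r b \<and> g r < 0)"
proof -
  define r where "r = 2 * i - 2"
  have r: "2 * i - 1 = Suc r" "2 * i = Suc (Suc r)" using assms unfolding r_def by auto
  have "cut g r \<le> cut g (Suc r)" "cut g (Suc r) \<le> cut g (Suc (Suc r))" by (simp_all add: cut_mono)
  then show ?thesis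
    unfolding interval_start_def interval_end_def in_run_def r_def[symmetric] r by auto
qed

lemma one_le_interval_start: "1 \<le> interval_start g i"
  unfolding interval_start_def by simp

lemma interval_start_le_end: "1 \<le> i \<Longrightarrow> interval_start g i \<le> interval_end g i"
  unfolding interval_start_def interval_end_def
  using cut_mono[of "2 * i - 2" "2 * i - 1" g] cut_mono[of "2 * i - 1" "2 * i" g]
    cut_mono[of "2 * i - 2" "2 * i" g] by auto

lemma interval_end_le_start: "1 \<le> i \<Longrightarrow> interval_end g i \<le> interval_start g (Suc i)"
  unfolding interval_start_def interval_end_def
  using cut_mono[of "2 * i - 1" "2 * i" g] cut_mono[of "2 * i" "2 * Suc i - 1" g] by auto

lemma interval_end_le_Suc_m: "in_box g \<Longrightarrow> i \<le> n \<Longrightarrow> interval_end g i \<le> m + 1"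
  unfolding interval_end_def using cut_le_m[of g "2 * i"] cut_le_m[of g "2 * i - 1"] unfolding d_def by auto

lemma negative_beads_eq_intervals:
  assumes "in_box g"
  shows "(\<Union>i\<in>{1..n}. {interval_start g i..<interval_end g i}) = {b\<in>{1..m}. negative g b}"
proof (intro equalityI subsetI)
  fix b assume "b \<in> (\<Union>i\<in>{1..n}. {interval_start g i..<interval_end g i})"
  then obtain i r where i: "i \<in> {1..n}" and r: "r \<in> {2 * i - 2, 2 * i - 1}" "in_run g r b" "g r < 0"
    using mem_interval_iff by fastforce
  then have "r < d" unfolding d_def by auto
  moreover have "b \<le> m"
    using r(2) cut_le_m[OF assms, of "Suc r"] \<open>r < d\<close> unfolding in_run_def by simp
  ultimately show "b \<in> {b\<in>{1..m}. negative g b}"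
    using r(2,3) unfolding negative_def in_run_def by auto
next
  fix b assume "b \<in> {b\<in>{1..m}. negative g b}"
  then obtain r where r: "r < d" "in_run g r b" "g r < 0" unfolding negative_def by blast
  define i where "i = r div 2 + 1"
  have "i \<in> {1..n}" "r \<in> {2 * i - 2, 2 * i - 1}" using r(1) unfolding i_def d_def by auto
  then show "b \<in> (\<Union>i\<in>{1..n}. {interval_start g i..<interval_end g i})"
    using mem_interval_iff r(2,3) by fastforce
qed

lemma discrepancy_eq_split:
  fixes g :: "nat \<Rightarrow> int" and j :: nat
  defines "I \<equiv> {b\<in>{1..m}. negative g b}"
  shows "real_of_int (discrepancy g j) = (\<Sum>b=1..m. real (x b j) + real (y b j))
    - 2 * ((\<Sum>b\<in>I. real (x b j)) + (\<Sum>b\<in>{1..m} - I. real (y b j)))"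
proof -
  have split: "(\<Sum>b=1..m. f b) = (\<Sum>b\<in>I. f b) + (\<Sum>b\<in>{1..m} - I. f b)" for f :: "nat \<Rightarrow> real"
  proof -
    have "I \<subseteq> {1..m}" unfolding I_def by blast
    then show ?thesis using sum.subset_diff[OF _ finite_atLeastAtMost, of I 1 m f] by (simp add: add.commute)
  qed
  have "real_of_int (discrepancy g j) = (\<Sum>b=1..m. real_of_int (bead_sign g b) * (real (x b j) - real (y b j)))"
    unfolding discrepancy_def by simp
  also have "\<dots> = (\<Sum>b\<in>I. real (y b j) - real (x b j)) + (\<Sum>b\<in>{1..m} - I. real (x b j) - real (y b j))"
    unfolding split unfolding I_def by (intro arg_cong2[where f = "(+)"] sum.cong) (auto simp: bead_sign_def)
  finally show ?thesis unfolding split by (simp add: sum.distrib sum_subtractf algebra_simps)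
qed


lemma balanced_negative_beads:
  fixes g :: "nat \<Rightarrow> int" and j :: nat
  assumes "\<not> unbalanced g" "j < 2 * n"
  defines "I \<equiv> {b\<in>{1..m}. negative g b}"
  shows "- 2 * real n * real (z j) + (\<Sum>b=1..m. real (x b j) + real (y b j)) / 2
      \<le> (\<Sum>b\<in>I. real (x b j)) + (\<Sum>b\<in>{1..m} - I. real (y b j))
    \<and> (\<Sum>b\<in>I. real (x b j)) + (\<Sum>b\<in>{1..m} - I. real (y b j))
      \<le> 2 * real n * real (z j) + (\<Sum>b=1..m. real (x b j) + real (y b j)) / 2"
proof -
  have "\<bar>discrepancy g j\<bar> \<le> tolerance j"
    using assms(1,2) unfolding unbalanced_def d_def by (meson not_less)
  then have "real_of_int \<bar>discrepancy g j\<bar> \<le> real_of_int (tolerance j)"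
    by (simp only: of_int_le_iff)
  then have "\<bar>real_of_int (discrepancy g j)\<bar> \<le> 4 * (real n * real (z j))"
    unfolding tolerance_def d_def by simp
  then have "\<bar>(\<Sum>b=1..m. real (x b j) + real (y b j))
      - 2 * ((\<Sum>b\<in>I. real (x b j)) + (\<Sum>b\<in>{1..m} - I. real (y b j)))\<bar> \<le> 4 * (real n * real (z j))"
    unfolding discrepancy_eq_split[of g j, folded I_def] .
  then show ?thesis unfolding mult.assoc by (rule half_bounds_if_abs_le)
qed
end

theorem lemma6:
  fixes n m :: nat
    and x y :: "nat \<Rightarrow> nat \<Rightarrow> nat"
    and z :: "nat \<Rightarrow> nat"
  assumes "n \<ge> 1" and "m \<ge> 1"
    and "\<forall>i\<in>{1..m}. \<forall>j<2*n. x i j \<le> z j"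
    and "\<forall>i\<in>{1..m}. \<forall>j<2*n. y i j \<le> z j"
  shows "\<exists>a b :: nat \<Rightarrow> nat.
           1 \<le> a 1 \<and> (\<forall>i\<in>{1..n}. a i \<le> b i) \<and>
           (\<forall>i\<in>{1..<n}. b i \<le> a (i+1)) \<and> b n \<le> m + 1 \<and>
           (let I = (\<Union>i\<in>{1..n}. {a i..<b i}) in
             \<forall>j<2*n.
               - 2 * real n * real (z j) + (\<Sum>i=1..m. real (x i j) + real (y i j)) / 2
                 \<le> (\<Sum>i\<in>I. real (x i j)) + (\<Sum>i\<in>{1..m} - I. real (y i j))
             \<and> (\<Sum>i\<in>I. real (x i j)) + (\<Sum>i\<in>{1..m} - I. real (y i j))
                 \<le> 2 * real n * real (z j) + (\<Sum>i=1..m. real (x i j) + real (y i j)) / 2)"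
proof -
  interpret necklace n m x y z using assms by unfold_locales
  obtain g where g: "in_box g" "\<not> unbalanced g" using ex_balanced by blast
  have intervals: "1 \<le> interval_start g 1" "\<forall>i\<in>{1..n}. interval_start g i \<le> interval_end g i"
    "\<forall>i\<in>{1..<n}. interval_end g i \<le> interval_start g (i + 1)" "interval_end g n \<le> m + 1"
    using one_le_interval_start interval_start_le_end interval_end_le_start interval_end_le_Suc_m[OF g(1)]
    by auto
  note balanced = balanced_negative_beads[OF g(2), folded negative_beads_eq_intervals[OF g(1)]]
  show ?thesis
    unfolding Let_def
  proof (rule exI[of _ "interval_start g"], rule exI[of _ "interval_end g"])
  qed (insert intervals balanced, blast)
qed

end
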